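(* Let $T:=12$, $U:=\mathcal{L}^2([0,T];\mathbb{R})\times\mathcal{L}^2([0,T];\mathbb{R})$, and $K_2:=\{(u_1,u_2)\in U:|u_1(t)|\le0.8,\ |u_2(t)|\le0.4\ \forall t\in[0,T]\}$. For $u=(u_1,u_2)\in U$ and $t\in[0,T]$ let $G_3(u)(t):=\pi/2+0.2\int_0^t\int_0^r(u_1(s)-u_2(s))\,ds\,dr$, and define $h=(h_1,\ldots,h_6):U\to\mathbb{R}^6$ by \[ \begin{aligned} h_1(u)&:=-10+\int_0^T\!\!\int_0^r(u_1(s)+u_2(s))\cos G_3(u)(s)\,ds\,dr, & h_2(u)&:=-10+\int_0^T\!\!\int_0^r(u_1(s)+u_2(s))\sin G_3(u)(s)\,ds\,dr,\\ h_3(u)&:=G_3(u)(T), & h_4(u)&:=\int_0^T(u_1(s)+u_2(s))\cos G_3(u)(s)\,ds,\\ h_5(u)&:=\int_0^T(u_1(s)+u_2(s))\sin G_3(u)(s)\,ds, & h_6(u)&:=0.2\int_0^T(u_1(s)-u_2(s))\,ds. \end{aligned} \] Then for every $z\in\mathbb{R}^6$ the set $K_2\cap h^{-1}(z)=\{u\in K_2:h(u)=z\}$ is weakly compact and hence weakly closed in $U$.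
   Context: The function $h$ encodes the free-flying robot dynamics: $h(u)=0$ iff the system $\dot x_1=x_4,\dot x_2=x_5,\dot x_3=x_6,\dot x_4=(u_1+u_2)\cos x_3,\dot x_5=(u_1+u_2)\sin x_3,\dot x_6=0.2(u_1-u_2)$ with $x(0)=(-10,-10,\pi/2,0,0,0)$ has $x(12)=0$. Weak compactness refers to the weak topology of the Hilbert space $U$; box constraints hold for (almost) every $t$. *)

theory Defs
  imports "HOL-Analysis.Analysis"
begin

text \<open>Representatives equal a.e. are not identified; all notions below only depend on the
  a.e.-class, so the weak topology below is the pullback of the weak topology of the
  Hilbert space U.\<close>

definition T_hor :: real where "T_hor = 12"

type_synonym ctrl = "(real \<Rightarrow> real) \<times> (real \<Rightarrow> real)"

definition sq_int :: "(real \<Rightarrow> real) \<Rightarrow> bool" where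
  "sq_int f \<longleftrightarrow> f measurable_on {0..T_hor} \<and> (\<lambda>t. (f t)^2) integrable_on {0..T_hor}"

definition U_space :: "ctrl set" where
  "U_space = {u. sq_int (fst u) \<and> sq_int (snd u)}"

definition ipU :: "ctrl \<Rightarrow> ctrl \<Rightarrow> real" where
  "ipU u v = integral {0..T_hor} (\<lambda>t. fst u t * fst v t + snd u t * snd v t)"

definition weak_topU :: "ctrl topology" where
  "weak_topU = pullback_topology U_space (\<lambda>u. restrict (\<lambda>v. ipU u v) U_space)
                 (product_topology (\<lambda>_. euclideanreal) U_space)"

definition K2 :: "ctrl set" where
  "K2 = {u \<in> U_space. AE t in lebesgue_on {0..T_hor}. \<bar>fst u t\<bar> \<le> 0.8 \<and> \<bar>snd u t\<bar> \<le> 0.4}"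

definition G3 :: "ctrl \<Rightarrow> real \<Rightarrow> real" where
  "G3 u t = pi/2 + 0.2 * integral {0..t} (\<lambda>r. integral {0..r} (\<lambda>s. fst u s - snd u s))"

definition h_map :: "ctrl \<Rightarrow> real^6" where
  "h_map u = vector
    [ -10 + integral {0..T_hor} (\<lambda>r. integral {0..r} (\<lambda>s. (fst u s + snd u s) * cos (G3 u s))),
      -10 + integral {0..T_hor} (\<lambda>r. integral {0..r} (\<lambda>s. (fst u s + snd u s) * sin (G3 u s))),
      G3 u T_hor,
      integral {0..T_hor} (\<lambda>s. (fst u s + snd u s) * cos (G3 u s)),
      integral {0..T_hor} (\<lambda>s. (fst u s + snd u s) * sin (G3 u s)),
      0.2 * integral {0..T_hor} (\<lambda>s. fst u s - snd u s) ]"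

end

theory Submission
  imports Defs
begin

(* The weak topology of U is the pullback of the product topology on R^U along the map
   u |-> (<u,v>)_v.  On K2 the box constraints give |<u,v>| <= ||v||_1, so K2 is mapped into a
   product of compact intervals (Tychonoff), and its image there is closed: a pointwise limit L
   of functionals <w,.> with w in K2 restricts on each component to a linear functional bounded
   by 0.8 ||.||_1 resp. 0.4 ||.||_1, which by Radon-Nikodym is integration against a function
   bounded by 0.8 resp. 0.4, so L = <u,.> with u in K2.  Since K2 is also closed under
   a.e.-equality, K2 is weakly compact and weakly closed.

   On K2 the map h is weakly continuous.  The primitives of u1 - u2 and of (u1 + u2) cos G3(u),
   (u1 + u2) sin G3(u) are 1.2-Lipschitz in time, uniformly on K2, so their pointwise weak
   convergence is uniform on [0,T].  Pointwise convergence holds because each value is an inner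
   product with a test function, up to a remainder that is controlled by the uniform
   convergence of G3.  Hence K2 \<inter> h^-1(z) is a closed subset of a weakly compact set. *)

section \<open>Pullback and product topologies\<close>

lemma closedin_product_topology_realI:
  fixes C :: "('a \<Rightarrow> real) set"
  assumes C: "C \<subseteq> topspace (product_topology (\<lambda>_. euclideanreal) I)"
    and adherent: "\<And>L. L \<in> extensional I \<Longrightarrow>
        (\<And>J e. finite J \<Longrightarrow> J \<subseteq> I \<Longrightarrow> 0 < e \<Longrightarrow> \<exists>g\<in>C. \<forall>i\<in>J. \<bar>g i - L i\<bar> < e) \<Longrightarrow> L \<in> C"
  shows "closedin (product_topology (\<lambda>_. euclideanreal) I) C"
proof -
  let ?P = "product_topology (\<lambda>_::'a. euclideanreal) I"
  have "openin ?P (topspace ?P - C)"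
    unfolding openin_product_topology_alt
  proof
    fix L assume L: "L \<in> topspace ?P - C"
    then have "L \<in> extensional I" "L \<notin> C"
      by (auto simp: PiE_def)
    then have "\<not> (\<forall>J e. finite J \<longrightarrow> J \<subseteq> I \<longrightarrow> 0 < e \<longrightarrow> (\<exists>g\<in>C. \<forall>i\<in>J. \<bar>g i - L i\<bar> < e))"
      using adherent by blast
    then obtain J e where J: "finite J" "J \<subseteq> I" "0 < e"
      and far: "\<And>g. g \<in> C \<Longrightarrow> \<exists>i\<in>J. e \<le> \<bar>g i - L i\<bar>"
      by (meson not_less)
    define U where "U i = (if i \<in> J then ball (L i) e else UNIV)" for i
    have "g \<notin> C" if "g \<in> Pi\<^sub>E I U" for g
      using far[of g] that J(2) by (force simp: U_def PiE_def Pi_def dist_real_def abs_minus_commute)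
    then show "\<exists>U. finite {i \<in> I. U i \<noteq> topspace euclideanreal} \<and> (\<forall>i\<in>I. openin euclideanreal (U i)) \<and>
        L \<in> Pi\<^sub>E I U \<and> Pi\<^sub>E I U \<subseteq> topspace ?P - C"
      using L J by (intro exI[of _ U]) (auto simp: U_def PiE_def Pi_def intro: finite_subset[OF _ J(1)])
  qed
  then show ?thesis
    using C by (simp add: closedin_def)
qed

lemma compactin_pullback_topology:
  assumes "S \<subseteq> A" and "compactin T (f ` S)"
  shows "compactin (pullback_topology A f T) S"
  unfolding compactin_def
proof (intro conjI allI impI)
  show "S \<subseteq> topspace (pullback_topology A f T)"
    using assms compactin_subset_topspace by (fastforce simp: topspace_pullback_topology)
  fix \<U> assume \<U>: "Ball \<U> (openin (pullback_topology A f T)) \<and> S \<subseteq> \<Union> \<U>"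
  then obtain V where V: "\<And>X. X \<in> \<U> \<Longrightarrow> openin T (V X) \<and> X = f -` V X \<inter> A"
    unfolding openin_pullback_topology by metis
  have "f ` S \<subseteq> \<Union> (V ` \<U>)" and "\<forall>U \<in> V ` \<U>. openin T U"
    using \<U> V by blast+
  then obtain \<F> where "finite \<F>" "\<F> \<subseteq> V ` \<U>" "f ` S \<subseteq> \<Union> \<F>"
    using assms(2) unfolding compactin_def by blast
  then obtain \<G> where "finite \<G>" "\<G> \<subseteq> \<U>" "f ` S \<subseteq> \<Union> (V ` \<G>)"
    by (metis finite_subset_image)
  moreover have "S \<subseteq> \<Union> \<G>"
    using calculation assms(1) V by blast
  ultimately show "\<exists>\<F>. finite \<F> \<and> \<F> \<subseteq> \<U> \<and> S \<subseteq> \<Union> \<F>"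
    by blast
qed

lemma closedin_pullback_topology:
  assumes "S \<subseteq> A" and "f ` A \<subseteq> topspace T" and "closedin T (f ` S)"
    and saturated: "\<And>x y. x \<in> A \<Longrightarrow> y \<in> S \<Longrightarrow> f x = f y \<Longrightarrow> x \<in> S"
  shows "closedin (pullback_topology A f T) S"
proof -
  have "topspace (pullback_topology A f T) - S = f -` (topspace T - f ` S) \<inter> A"
    using assms by (auto simp: topspace_pullback_topology)
  then have "openin (pullback_topology A f T) (topspace (pullback_topology A f T) - S)"
    using assms(3) by (auto simp: openin_pullback_topology)
  then show ?thesis
    using assms(1,2) by (auto simp: closedin_def topspace_pullback_topology)
qed

section \<open>Integrals and uniform limits\<close>

lemma abs_integral_le_AE:
  fixes f g :: "real \<Rightarrow> real"
  assumes "negligible N" "\<And>t. t \<in> S - N \<Longrightarrow> \<bar>f t\<bar> \<le> g t" "f integrable_on S" "g integrable_on S"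
  shows "\<bar>integral S f\<bar> \<le> integral S g"
proof -
  let ?f = "\<lambda>t. if t \<in> N then 0 else f t" and ?g = "\<lambda>t. if t \<in> N then 0 else g t"
  have "integral S f = integral S ?f" "integral S g = integral S ?g"
    by (auto intro!: integral_spike[OF assms(1)])
  moreover have "norm (integral S ?f) \<le> integral S ?g"
    by (rule integral_norm_bound_integral)
      (auto intro: integrable_spike[OF assms(3) assms(1)] integrable_spike[OF assms(4) assms(1)]
            simp: assms(2))
  ultimately show ?thesis
    by simp
qed

lemma uniform_limit_if_tendsto_lipschitz:
  fixes f :: "'a \<Rightarrow> 'b::metric_space \<Rightarrow> 'c::metric_space"
  assumes S: "compact S"
    and lim: "\<And>x. x \<in> S \<Longrightarrow> ((\<lambda>n. f n x) \<longlongrightarrow> g x) F"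
    and lip: "eventually (\<lambda>n. M-lipschitz_on S (f n)) F" and lip_g: "M-lipschitz_on S g"
  shows "uniform_limit S f g F"
proof (rule uniform_limitI)
  fix e :: real assume e: "0 < e"
  have M: "0 \<le> M"
    using lip_g by (simp add: lipschitz_on_def)
  define \<delta> where "\<delta> = e / (3 * (M + 1))"
  have \<delta>: "0 < \<delta>" "M * \<delta> < e / 3"
    using e M by (auto simp: \<delta>_def field_simps)
  obtain K where K: "K \<subseteq> S" "finite K" "S \<subseteq> (\<Union>y\<in>K. ball y \<delta>)"
  proof (rule compactE_image[OF S, of S "\<lambda>y. ball y \<delta>"])
    show "S \<subseteq> (\<Union>y\<in>S. ball y \<delta>)"
    proof
      fix x assume "x \<in> S"
      with \<delta>(1) show "x \<in> (\<Union>y\<in>S. ball y \<delta>)"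
        by (intro UN_I[of x]) auto
    qed
  qed (simp_all add: that)
  have "\<forall>y\<in>K. eventually (\<lambda>n. dist (f n y) (g y) < e / 3) F"
  proof
    fix y assume "y \<in> K"
    with K(1) e show "eventually (\<lambda>n. dist (f n y) (g y) < e / 3) F"
      by (intro tendstoD[OF lim]) auto
  qed
  then have "eventually (\<lambda>n. \<forall>y\<in>K. dist (f n y) (g y) < e / 3) F"
    by (rule eventually_ball_finite[OF K(2)])
  with lip show "eventually (\<lambda>n. \<forall>x\<in>S. dist (f n x) (g x) < e) F"
  proof eventually_elim
    case (elim n)
    show ?case
    proof
      fix x assume x: "x \<in> S"
      then obtain y where y: "y \<in> K" "dist y x < \<delta>"
        using K(3) by auto
      with K(1) have "y \<in> S"
        by blast
      have "dist (f n x) (f n y) \<le> M * dist x y" "dist (g y) (g x) \<le> M * dist y x"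
        using elim(1) lip_g x \<open>y \<in> S\<close> by (auto simp: lipschitz_on_def)
      moreover have "M * dist x y \<le> M * \<delta>" "M * dist y x \<le> M * \<delta>"
        using y(2) M by (simp_all add: dist_commute mult_left_mono)
      moreover have "dist (f n y) (g y) < e / 3"
        using elim(2) y(1) by blast
      moreover have "dist (f n x) (g x) \<le> dist (f n x) (f n y) + dist (f n y) (g y) + dist (g y) (g x)"
        using dist_triangle[of "f n x" "g x" "f n y"] dist_triangle[of "f n y" "g x" "g y"] by linarith
      ultimately show "dist (f n x) (g x) < e"
        using \<delta>(2) by linarith
    qed
  qed
qed

lemma uniform_limit_indefinite_integral:
  fixes f :: "'a \<Rightarrow> real \<Rightarrow> real"
  assumes lim: "uniform_limit {a..b} f g F"
    and f_int: "eventually (\<lambda>n. f n integrable_on {a..b}) F" and g_int: "g integrable_on {a..b}"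
  shows "uniform_limit {a..b} (\<lambda>n r. integral {a..r} (f n)) (\<lambda>r. integral {a..r} g) F"
proof (rule uniform_limitI)
  fix e :: real assume e: "0 < e"
  define e' where "e' = e / (\<bar>b - a\<bar> + 1)"
  have e': "0 < e'" "\<bar>b - a\<bar> * e' < e"
    using e by (auto simp: e'_def field_simps)
  from f_int uniform_limitD[OF lim e'(1)]
  show "eventually (\<lambda>n. \<forall>r\<in>{a..b}. dist (integral {a..r} (f n)) (integral {a..r} g) < e) F"
  proof eventually_elim
    case (elim n)
    show ?case
    proof
      fix r assume r: "r \<in> {a..b}"
      have sub: "{a..r} \<subseteq> {a..b}"
        using r by auto
      have fi: "f n integrable_on {a..r}" and gi: "g integrable_on {a..r}"
        using integrable_on_subinterval[OF elim(1) sub] integrable_on_subinterval[OF g_int sub] .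
      have "dist (integral {a..r} (f n)) (integral {a..r} g) = norm (integral {a..r} (\<lambda>s. f n s - g s))"
        by (simp add: dist_norm integral_diff[OF fi gi])
      also have "\<dots> \<le> integral {a..r} (\<lambda>s. e')"
        using elim(2) sub
        by (intro integral_norm_bound_integral integrable_diff fi gi) (auto simp: dist_norm less_imp_le)
      also have "\<dots> = (r - a) * e'"
        using r by simp
      also have "\<dots> \<le> \<bar>b - a\<bar> * e'"
        using r e'(1) by (intro mult_right_mono) auto
      also have "\<dots> < e"
        by (fact e'(2))
      finally show "dist (integral {a..r} (f n)) (integral {a..r} g) < e" .
    qed
  qed
qed

lemma lipschitz_on_indefinite_integral:
  fixes f :: "real \<Rightarrow> real"
  assumes f: "f integrable_on {a..b}" and N: "negligible N"
    and bound: "\<And>t. t \<in> {a..b} - N \<Longrightarrow> \<bar>f t\<bar> \<le> M" and M: "0 \<le> M"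
  shows "M-lipschitz_on {a..b} (\<lambda>r. integral {a..r} f)"
proof -
  have le: "\<bar>integral {a..s} f - integral {a..r} f\<bar> \<le> M * (s - r)"
    if rs: "r \<le> s" "r \<in> {a..b}" "s \<in> {a..b}" for r s
  proof -
    have "integral {a..r} f + integral {r..s} f = integral {a..s} f"
      using rs integrable_on_subinterval[OF f, of a s]
      by (intro Henstock_Kurzweil_Integration.integral_combine) auto
    moreover have "\<bar>integral {r..s} f\<bar> \<le> integral {r..s} (\<lambda>t. M)"
      using rs bound by (intro abs_integral_le_AE[OF N] integrable_on_subinterval[OF f]) auto
    ultimately show ?thesis
      using rs by (simp add: algebra_simps)
  qed
  show ?thesis
  proof (rule lipschitz_onI[OF _ M])
    fix r s assume "r \<in> {a..b}" "s \<in> {a..b}"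
    then show "dist (integral {a..r} f) (integral {a..s} f) \<le> M * dist r s"
      using le[of r s] le[of s r] by (cases "r \<le> s") (auto simp: dist_real_def abs_minus_commute)
  qed
qed

section \<open>Densities\<close>

lemma sigma_finite_measure_lebesgue: "sigma_finite_measure (lebesgue :: real measure)"
proof
  show "\<exists>A. countable A \<and> A \<subseteq> sets (lebesgue :: real measure) \<and> \<Union> A = space lebesgue \<and>
      (\<forall>a\<in>A. emeasure lebesgue a \<noteq> \<infinity>)"
  proof (intro exI[of _ "range (\<lambda>n::nat. {-real n..real n})"] conjI)
    show "\<Union> (range (\<lambda>n::nat. {-real n..real n})) = space lebesgue"
    proof auto
      fix x :: real
      obtain n :: nat where "\<bar>x\<bar> \<le> real n"
        using real_arch_simple by blast
      then show "\<exists>n::nat. - real n \<le> x \<and> x \<le> real n"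
        by (intro exI[of _ n]) auto
    qed
  qed auto
qed

lemma AE_le_if_set_nn_integral_le:
  fixes f g :: "'a \<Rightarrow> ennreal"
  assumes [measurable]: "f \<in> borel_measurable M" "g \<in> borel_measurable M"
    and finite: "(\<integral>\<^sup>+x. g x \<partial>M) \<noteq> \<infinity>"
    and le: "\<And>A. A \<in> sets M \<Longrightarrow> (\<integral>\<^sup>+x. f x * indicator A x \<partial>M) \<le> (\<integral>\<^sup>+x. g x * indicator A x \<partial>M)"
  shows "AE x in M. f x \<le> g x"
proof (rule ccontr)
  assume not_AE: "\<not> (AE x in M. f x \<le> g x)"
  define N where "N = {x \<in> space M. g x < f x}"
  have N [measurable]: "N \<in> sets M"
    unfolding N_def by measurable
  have "(\<integral>\<^sup>+x. g x * indicator N x \<partial>M) < (\<integral>\<^sup>+x. f x * indicator N x \<partial>M)"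
  proof (rule nn_integral_less)
    have "(\<integral>\<^sup>+x. g x * indicator N x \<partial>M) \<le> (\<integral>\<^sup>+x. g x \<partial>M)"
      by (intro nn_integral_mono) (simp add: indicator_def)
    with finite show "(\<integral>\<^sup>+x. g x * indicator N x \<partial>M) \<noteq> \<infinity>"
      by (auto simp: top_unique)
    show "AE x in M. g x * indicator N x \<le> f x * indicator N x"
      by (intro AE_I2) (auto simp: N_def indicator_def less_imp_le)
    show "\<not> (AE x in M. f x * indicator N x \<le> g x * indicator N x)"
    proof
      assume "AE x in M. f x * indicator N x \<le> g x * indicator N x"
      with AE_space have "AE x in M. f x \<le> g x"
      proof eventually_elim
        case (elim x)
        show ?case
        proof (cases "g x < f x")
          case True
          with elim show ?thesis
            by (simp add: N_def)
        qed (simp add: not_less)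
      qed
      with not_AE show False ..
    qed
  qed measurable
  with le[OF N] show False
    using leD by blast
qed

section \<open>Square-integrable functions on [0, T]\<close>

abbreviation I_T :: "real set" where "I_T \<equiv> {0..T_hor}"

lemma T_hor_pos [simp]: "0 < T_hor"
  by (simp add: T_hor_def)

lemma T_hor_in_I_T: "T_hor \<in> I_T" and zero_in_I_T: "0 \<in> I_T"
  by (simp_all add: T_hor_def)

lemma sq_int_iff_borel:
  "sq_int f \<longleftrightarrow> f \<in> borel_measurable (lebesgue_on I_T) \<and> (\<lambda>t. (f t)\<^sup>2) integrable_on I_T"
  unfolding sq_int_def by (simp add: measurable_on_iff_borel_measurable)

lemma sq_intI_bounded:
  assumes "f \<in> borel_measurable (lebesgue_on I_T)" and "\<And>t. t \<in> I_T \<Longrightarrow> \<bar>f t\<bar> \<le> M"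
  shows "sq_int f"
proof -
  have "(\<lambda>t. (f t)\<^sup>2) integrable_on I_T"
  proof (rule measurable_bounded_by_integrable_imp_integrable_real)
    show "(\<lambda>t. (f t)\<^sup>2) \<in> borel_measurable (lebesgue_on I_T)"
      using assms(1) by measurable
    show "(\<lambda>t. M\<^sup>2) integrable_on I_T"
      by (simp add: integrable_on_const)
    show "\<bar>(f t)\<^sup>2\<bar> \<le> M\<^sup>2" if "t \<in> I_T" for t
      using assms(2)[OF that] by (metis abs_ge_zero power2_abs power_mono abs_power2)
  qed simp
  with assms(1) show ?thesis
    by (simp add: sq_int_iff_borel)
qed

lemma sq_intI_bounded_lebesgue:
  "f \<in> borel_measurable lebesgue \<Longrightarrow> (\<And>t. \<bar>f t\<bar> \<le> M) \<Longrightarrow> sq_int f"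
  by (rule sq_intI_bounded[where M = M]) (auto intro: measurable_restrict_space1)

lemma sq_int_indicator: "A \<in> sets lebesgue \<Longrightarrow> sq_int (indicator A)"
  by (rule sq_intI_bounded_lebesgue[where M = 1]) (auto simp: indicator_def)

lemma sq_int_const: "sq_int (\<lambda>t. c)"
  by (rule sq_intI_bounded_lebesgue[where M = "\<bar>c\<bar>"]) auto

lemma sq_int_lincomb:
  assumes "sq_int f" "sq_int g"
  shows "sq_int (\<lambda>t. a * f t + b * g t)"
proof -
  have [measurable]: "f \<in> borel_measurable (lebesgue_on I_T)" "g \<in> borel_measurable (lebesgue_on I_T)"
    using assms by (simp_all add: sq_int_iff_borel)
  have m: "(\<lambda>t. a * f t + b * g t) \<in> borel_measurable (lebesgue_on I_T)"
    by measurable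
  have "(\<lambda>t. (a * f t + b * g t)\<^sup>2) integrable_on I_T"
  proof (rule measurable_bounded_by_integrable_imp_integrable_real)
    show "(\<lambda>t. (a * f t + b * g t)\<^sup>2) \<in> borel_measurable (lebesgue_on I_T)"
      using m by measurable
    show "(\<lambda>t. 2 * a\<^sup>2 * (f t)\<^sup>2 + 2 * b\<^sup>2 * (g t)\<^sup>2) integrable_on I_T"
      using assms by (auto simp: sq_int_def intro!: integrable_add integrable_on_mult_right)
    show "\<bar>(a * f t + b * g t)\<^sup>2\<bar> \<le> 2 * a\<^sup>2 * (f t)\<^sup>2 + 2 * b\<^sup>2 * (g t)\<^sup>2" for t
    proof -
      have "(a * f t + b * g t)\<^sup>2 \<le> 2 * a\<^sup>2 * (f t)\<^sup>2 + 2 * b\<^sup>2 * (g t)\<^sup>2"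
        using zero_le_power2[of "a * f t - b * g t"] by (simp add: power2_eq_square algebra_simps)
      then show ?thesis
        by simp
    qed
  qed simp
  with m show ?thesis
    by (simp add: sq_int_iff_borel)
qed

lemma sq_int_add: "sq_int f \<Longrightarrow> sq_int g \<Longrightarrow> sq_int (\<lambda>t. f t + g t)"
  using sq_int_lincomb[of f g 1 1] by simp

lemma sq_int_diff: "sq_int f \<Longrightarrow> sq_int g \<Longrightarrow> sq_int (\<lambda>t. f t - g t)"
  using sq_int_lincomb[of f g 1 "-1"] by simp

lemma sq_int_cmult: "sq_int f \<Longrightarrow> sq_int (\<lambda>t. a * f t)"
  using sq_int_lincomb[of f f a 0] by simp

lemma sq_int_simple_function:
  assumes "simple_function lebesgue F"
  shows "sq_int F"
proof -
  have "finite (range F)"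
    using simple_functionD(1)[OF assms] by simp
  then obtain M where "\<forall>y\<in>range F. \<bar>y\<bar> \<le> M"
    using finite_imp_bounded by (meson bounded_real)
  then show ?thesis
    by (intro sq_intI_bounded_lebesgue[where M = M] borel_measurable_simple_function[OF assms]) auto
qed

lemma sq_int_sum:
  "finite F \<Longrightarrow> (\<And>i. i \<in> F \<Longrightarrow> sq_int (f i)) \<Longrightarrow> sq_int (\<lambda>t. \<Sum>i\<in>F. f i t)"
  by (induction F rule: finite_induct) (auto simp: sq_int_const sq_int_add)

lemma sq_int_mult_absolutely_integrable:
  assumes "sq_int f" "sq_int g"
  shows "(\<lambda>t. f t * g t) absolutely_integrable_on I_T"
proof (rule measurable_bounded_by_integrable_imp_absolutely_integrable)
  have [measurable]: "f \<in> borel_measurable (lebesgue_on I_T)" "g \<in> borel_measurable (lebesgue_on I_T)"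
    using assms by (simp_all add: sq_int_iff_borel)
  show "(\<lambda>t. f t * g t) \<in> borel_measurable (lebesgue_on I_T)"
    by measurable
  show "(\<lambda>t. (f t)\<^sup>2 + (g t)\<^sup>2) integrable_on I_T"
    using assms by (auto simp: sq_int_def intro!: integrable_add)
  show "norm (f t * g t) \<le> (f t)\<^sup>2 + (g t)\<^sup>2" for t
  proof -
    have "2 * (\<bar>f t\<bar> * \<bar>g t\<bar>) \<le> (f t)\<^sup>2 + (g t)\<^sup>2"
      using sum_squares_bound[of "\<bar>f t\<bar>" "\<bar>g t\<bar>"] by (simp add: mult.assoc)
    moreover have "0 \<le> \<bar>f t\<bar> * \<bar>g t\<bar>"
      by simp
    ultimately show ?thesis
      unfolding norm_mult real_norm_def by linarith
  qed
qed simp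

lemma sq_int_mult_integrable: "sq_int f \<Longrightarrow> sq_int g \<Longrightarrow> (\<lambda>t. f t * g t) integrable_on I_T"
  using sq_int_mult_absolutely_integrable set_lebesgue_integral_eq_integral(1) by blast

lemma sq_int_absolutely_integrable: "sq_int f \<Longrightarrow> f absolutely_integrable_on I_T"
  using sq_int_mult_absolutely_integrable[OF _ sq_int_const, of f 1] by simp

lemma sq_int_integrable: "sq_int f \<Longrightarrow> f integrable_on I_T"
  using sq_int_absolutely_integrable set_lebesgue_integral_eq_integral(1) by blast

lemma sq_int_abs_integrable: "sq_int f \<Longrightarrow> (\<lambda>t. \<bar>f t\<bar>) integrable_on I_T"
  using sq_int_absolutely_integrable[unfolded absolutely_integrable_on_def] by simp

lemma integral_mult_bounded_measurable:
  assumes "g \<in> borel_measurable lebesgue" "\<And>t. \<bar>g t\<bar> \<le> c" "sq_int f"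
  shows "(\<lambda>t. g t * f t) integrable_on I_T"
    and "\<bar>integral I_T (\<lambda>t. g t * f t)\<bar> \<le> c * integral I_T (\<lambda>t. \<bar>f t\<bar>)"
proof -
  show i: "(\<lambda>t. g t * f t) integrable_on I_T"
    using sq_int_mult_integrable[OF sq_intI_bounded_lebesgue[OF assms(1,2)] assms(3)] .
  have "norm (integral I_T (\<lambda>t. g t * f t)) \<le> integral I_T (\<lambda>t. c * \<bar>f t\<bar>)"
  proof (rule integral_norm_bound_integral[OF i])
    show "(\<lambda>t. c * \<bar>f t\<bar>) integrable_on I_T"
      using sq_int_abs_integrable[OF assms(3)] by (rule integrable_on_mult_right)
    show "norm (g t * f t) \<le> c * \<bar>f t\<bar>" for t
      using assms(2)[of t] by (simp add: abs_mult mult_right_mono)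
  qed
  then show "\<bar>integral I_T (\<lambda>t. g t * f t)\<bar> \<le> c * integral I_T (\<lambda>t. \<bar>f t\<bar>)"
    by simp
qed

lemma integral_mult_lincomb:
  assumes "sq_int w" "sq_int f" "sq_int g"
  shows "integral I_T (\<lambda>t. w t * (a * f t + b * g t))
       = a * integral I_T (\<lambda>t. w t * f t) + b * integral I_T (\<lambda>t. w t * g t)"
proof -
  have "integral I_T (\<lambda>t. w t * (a * f t + b * g t)) = integral I_T (\<lambda>t. a * (w t * f t) + b * (w t * g t))"
    by (simp add: algebra_simps)
  also have "\<dots> = a * integral I_T (\<lambda>t. w t * f t) + b * integral I_T (\<lambda>t. w t * g t)"
    using assms by (subst integral_add) (auto intro: integrable_on_mult_right sq_int_mult_integrable)
  finally show ?thesis .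
qed

lemma abs_integral_mult_le_AE:
  assumes "sq_int w" "sq_int f" "negligible N" "\<And>t. t \<in> I_T - N \<Longrightarrow> \<bar>w t\<bar> \<le> c"
  shows "\<bar>integral I_T (\<lambda>t. w t * f t)\<bar> \<le> c * integral I_T (\<lambda>t. \<bar>f t\<bar>)"
proof -
  have "\<bar>integral I_T (\<lambda>t. w t * f t)\<bar> \<le> integral I_T (\<lambda>t. c * \<bar>f t\<bar>)"
  proof (rule abs_integral_le_AE[OF assms(3)])
    show "\<bar>w t * f t\<bar> \<le> c * \<bar>f t\<bar>" if "t \<in> I_T - N" for t
      using assms(4)[OF that] by (simp add: abs_mult mult_right_mono)
  qed (use assms in \<open>auto intro: sq_int_mult_integrable integrable_on_mult_right sq_int_abs_integrable\<close>)
  then show ?thesis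
    by simp
qed

section \<open>Functionals bounded in the L1 norm\<close>

locale L1_bounded_functional =
  fixes \<Lambda> :: "(real \<Rightarrow> real) \<Rightarrow> real" and C :: real
  assumes bound_nonneg: "0 \<le> C"
    and linear: "\<And>f g a b. sq_int f \<Longrightarrow> sq_int g \<Longrightarrow> \<Lambda> (\<lambda>t. a * f t + b * g t) = a * \<Lambda> f + b * \<Lambda> g"
    and bounded: "\<And>f. sq_int f \<Longrightarrow> \<bar>\<Lambda> f\<bar> \<le> C * integral I_T (\<lambda>t. \<bar>f t\<bar>)"
begin

lemma zero: "\<Lambda> (\<lambda>t. 0) = 0"
  using linear[OF sq_int_const sq_int_const, of 0 0 0 0] by simp

lemma add: "sq_int f \<Longrightarrow> sq_int g \<Longrightarrow> \<Lambda> (\<lambda>t. f t + g t) = \<Lambda> f + \<Lambda> g"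
  using linear[of f g 1 1] by simp

lemma diff: "sq_int f \<Longrightarrow> sq_int g \<Longrightarrow> \<Lambda> (\<lambda>t. f t - g t) = \<Lambda> f - \<Lambda> g"
  using linear[of f g 1 "-1"] by simp

lemma cmult: "sq_int f \<Longrightarrow> \<Lambda> (\<lambda>t. a * f t) = a * \<Lambda> f"
  using linear[of f f a 0] by simp

lemma sum:
  "finite F \<Longrightarrow> (\<And>i. i \<in> F \<Longrightarrow> sq_int (f i)) \<Longrightarrow> \<Lambda> (\<lambda>t. \<Sum>i\<in>F. f i t) = (\<Sum>i\<in>F. \<Lambda> (f i))"
proof (induction F rule: finite_induct)
  case (insert x F)
  then have "\<Lambda> (\<lambda>t. \<Sum>i\<in>insert x F. f i t) = \<Lambda> (f x) + \<Lambda> (\<lambda>t. \<Sum>i\<in>F. f i t)"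
    by (simp add: add sq_int_sum)
  with insert show ?case
    by simp
qed (simp add: zero)

lemma cong_negligible:
  assumes "sq_int f" "sq_int g" "negligible N" "\<And>t. t \<in> I_T - N \<Longrightarrow> f t = g t"
  shows "\<Lambda> f = \<Lambda> g"
proof -
  have "\<bar>\<Lambda> (\<lambda>t. f t - g t)\<bar> \<le> C * integral I_T (\<lambda>t. \<bar>f t - g t\<bar>)"
    using assms by (simp add: bounded sq_int_diff)
  also have "integral I_T (\<lambda>t. \<bar>f t - g t\<bar>) = integral I_T (\<lambda>t. 0)"
    by (rule integral_spike[OF assms(3)]) (use assms(4) in auto)
  finally show ?thesis
    using diff[OF assms(1,2)] by simp
qed

lemma tendsto_dominated:
  assumes s: "\<And>n. sq_int (s n)" and f: "sq_int f" and h: "h integrable_on I_T"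
    and le: "\<And>n t. t \<in> I_T \<Longrightarrow> \<bar>s n t\<bar> \<le> h t"
    and lim: "\<And>t. t \<in> I_T \<Longrightarrow> (\<lambda>n. s n t) \<longlonglongrightarrow> f t"
  shows "(\<lambda>n. \<Lambda> (s n)) \<longlonglongrightarrow> \<Lambda> f"
proof -
  define k where "k = (\<lambda>n t. \<bar>s n t - f t\<bar>)"
  have "(\<lambda>n. integral I_T (k n)) \<longlonglongrightarrow> integral I_T (\<lambda>t. 0)"
  proof (rule dominated_convergence(2))
    show "k n integrable_on I_T" for n
      unfolding k_def by (rule sq_int_abs_integrable[OF sq_int_diff[OF s f]])
    show "(\<lambda>t. h t + \<bar>f t\<bar>) integrable_on I_T"
      by (rule integrable_add[OF h sq_int_abs_integrable[OF f]])
    show "norm (k n t) \<le> h t + \<bar>f t\<bar>" if "t \<in> I_T" for n t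
      using le[OF that, of n] by (auto simp: k_def)
    show "(\<lambda>n. k n t) \<longlonglongrightarrow> 0" if "t \<in> I_T" for t
      using tendsto_rabs[OF lim[OF that, THEN LIM_zero]] by (simp add: k_def)
  qed
  then have "(\<lambda>n. integral I_T (k n)) \<longlonglongrightarrow> 0"
    by simp
  then have "(\<lambda>n. C * integral I_T (k n)) \<longlonglongrightarrow> 0"
    by (rule tendsto_mult_right_zero)
  moreover have "\<forall>\<^sub>F n in sequentially. norm (\<Lambda> (s n) - \<Lambda> f) \<le> C * integral I_T (k n)"
    using bounded[OF sq_int_diff[OF s f]] diff[OF s f] by (simp add: k_def)
  ultimately have "(\<lambda>n. \<Lambda> (s n) - \<Lambda> f) \<longlonglongrightarrow> 0"
    by (rule Lim_null_comparison[rotated])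
  then show ?thesis
    by (rule LIM_zero_cancel)
qed

lemma sums_indicator:
  assumes A: "range A \<subseteq> sets lebesgue" and disj: "disjoint_family A"
  shows "(\<lambda>i. \<Lambda> (indicator (A i))) sums \<Lambda> (indicator (\<Union>i. A i))"
proof -
  have Ai: "A i \<in> sets lebesgue" for i
    using A by auto
  have partial: "(\<Sum>i<n. \<Lambda> (indicator (A i))) = \<Lambda> (indicator (\<Union>i<n. A i))" for n
  proof -
    have "(\<lambda>t. \<Sum>i<n. indicator (A i) t) = (indicator (\<Union>i<n. A i) :: real \<Rightarrow> real)"
    proof
      fix t
      have "indicator (\<Union>i<n. A i) t = (\<Sum>i<n. indicator (A i) t :: real)"
        by (rule indicator_UN_disjoint) (simp_all add: disjoint_family_on_mono[OF subset_UNIV disj])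
      then show "(\<Sum>i<n. indicator (A i) t) = (indicator (\<Union>i<n. A i) t :: real)"
        by simp
    qed
    moreover have "\<Lambda> (\<lambda>t. \<Sum>i<n. indicator (A i) t) = (\<Sum>i<n. \<Lambda> (indicator (A i)))"
      by (rule sum) (auto intro: sq_int_indicator Ai)
    ultimately show ?thesis
      by simp
  qed
  have "(\<lambda>n. \<Lambda> (indicator (\<Union>i<n. A i))) \<longlonglongrightarrow> \<Lambda> (indicator (\<Union>i. A i))"
  proof (rule tendsto_dominated[where h = "\<lambda>t. 1"])
    show "sq_int (indicator (\<Union>i<n. A i))" for n
      using Ai by (auto intro: sq_int_indicator)
    show "sq_int (indicator (\<Union>i. A i))"
      using Ai by (auto intro: sq_int_indicator)
    show "(\<lambda>n. indicator (\<Union>i<n. A i) t :: real) \<longlonglongrightarrow> indicator (\<Union>i. A i) t" for t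
      by (rule LIMSEQ_indicator_UN)
  qed (auto simp: indicator_def)
  then show ?thesis
    unfolding sums_def partial .
qed

lemma eq_0_on_simple_function:
  assumes ind: "\<And>A. A \<in> sets lebesgue \<Longrightarrow> \<Lambda> (indicator A) = 0"
    and F: "simple_function lebesgue F"
  shows "\<Lambda> F = 0"
proof -
  have fin: "finite (range F)"
    using simple_functionD(1)[OF F] by simp
  have pre: "F -` {y} \<in> sets lebesgue" for y
    using simple_functionD(2)[OF F, of "{y}"] by simp
  have rep: "F t = (\<Sum>y\<in>range F. y * indicator (F -` {y}) t)" for t
  proof -
    have "F t = (\<Sum>y\<in>range F. indicator (F -` {y}) t * y)"
      using simple_function_indicator_representation_banach[OF F, of t]
      by (simp only: space_completion space_lborel space_borel Int_UNIV_right real_scaleR_def UNIV_I True_implies_equals)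
    also have "\<dots> = (\<Sum>y\<in>range F. y * indicator (F -` {y}) t)"
      by (rule sum.cong[OF refl]) (rule mult.commute)
    finally show ?thesis .
  qed
  have "\<Lambda> F = \<Lambda> (\<lambda>t. \<Sum>y\<in>range F. y * indicator (F -` {y}) t)"
    by (rule arg_cong[where f = \<Lambda>], rule ext, rule rep)
  also have "\<dots> = (\<Sum>y\<in>range F. \<Lambda> (\<lambda>t. y * indicator (F -` {y}) t))"
    using fin by (intro sum) (auto intro: sq_int_cmult sq_int_indicator pre)
  also have "\<dots> = 0"
    by (simp add: cmult[OF sq_int_indicator[OF pre]] ind[OF pre])
  finally show ?thesis .
qed

lemma eq_0_if_indicator_eq_0:
  assumes ind: "\<And>A. A \<in> sets lebesgue \<Longrightarrow> \<Lambda> (indicator A) = 0" and f: "sq_int f"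
  shows "\<Lambda> f = 0"
proof -
  define f0 where "f0 t = indicator I_T t * f t" for t
  have f0_meas: "f0 \<in> borel_measurable lebesgue"
    unfolding f0_def using f borel_measurable_restrict_space_iff[of I_T lebesgue f]
    by (simp add: f0_def sq_int_iff_borel)
  have f0_sq_int: "sq_int f0"
  proof -
    have "(\<lambda>t. (f t)\<^sup>2) integrable_on I_T"
      using f by (simp add: sq_int_def)
    then have "(\<lambda>t. (f0 t)\<^sup>2) integrable_on I_T"
      by (rule integrable_eq) (simp add: f0_def)
    with f0_meas show ?thesis
      by (simp add: sq_int_iff_borel measurable_restrict_space1)
  qed
  obtain F where F: "\<And>i. simple_function lebesgue (F i)" "\<And>x. (\<lambda>i. F i x) \<longlonglongrightarrow> f0 x"
      "\<And>i x. dist (F i x) 0 \<le> 2 * dist (f0 x) 0"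
    using borel_measurable_implies_sequence_metric[OF f0_meas, of 0] by auto
  have "(\<lambda>i. \<Lambda> (F i)) \<longlonglongrightarrow> \<Lambda> f0"
  proof (rule tendsto_dominated[OF sq_int_simple_function[OF F(1)] f0_sq_int])
    show "(\<lambda>t. 2 * \<bar>f0 t\<bar>) integrable_on I_T"
      using sq_int_abs_integrable[OF f0_sq_int] by (rule integrable_on_mult_right)
    show "\<bar>F n t\<bar> \<le> 2 * \<bar>f0 t\<bar>" for n t
      using F(3)[of n t] by (simp add: dist_real_def)
  qed (rule F(2))
  moreover have "\<Lambda> (F i) = 0" for i
    by (rule eq_0_on_simple_function[OF ind F(1)])
  ultimately have "\<Lambda> f0 = 0"
    by (simp add: LIMSEQ_const_iff)
  moreover have "\<Lambda> f = \<Lambda> f0"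
    by (rule cong_negligible[OF f f0_sq_int, of "{}"]) (auto simp: f0_def)
  ultimately show ?thesis
    by simp
qed

lemma indicator_density:
  assumes nonneg: "\<And>A. A \<in> sets lebesgue \<Longrightarrow> 0 \<le> \<Lambda> (indicator A)"
  obtains f where "f \<in> borel_measurable lebesgue"
    and "\<And>A. A \<in> sets lebesgue \<Longrightarrow> (\<integral>\<^sup>+x. f x * indicator A x \<partial>lebesgue) = ennreal (\<Lambda> (indicator A))"
proof -
  define \<mu> where "\<mu> A = ennreal (\<Lambda> (indicator A))" for A
  have sa: "sigma_algebra UNIV (sets (lebesgue :: real measure))"
    using sets.sigma_algebra_axioms[of lebesgue] by simp
  have pos: "positive (sets lebesgue) \<mu>"
    unfolding positive_def \<mu>_def using zero by (simp add: indicator_def[abs_def])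
  have ca: "countably_additive (sets lebesgue) \<mu>"
    unfolding countably_additive_def
  proof (intro allI impI)
    fix A :: "nat \<Rightarrow> real set"
    assume A: "range A \<subseteq> sets lebesgue" and disj: "disjoint_family A"
    have s: "(\<lambda>i. \<Lambda> (indicator (A i))) sums \<Lambda> (indicator (\<Union>i. A i))"
      by (rule sums_indicator[OF A disj])
    then have "(\<Sum>i. \<mu> (A i)) = ennreal (\<Sum>i. \<Lambda> (indicator (A i)))"
      unfolding \<mu>_def using A nonneg by (intro suminf_ennreal2) (auto simp: sums_iff)
    also have "\<dots> = \<mu> (\<Union> (range A))"
      unfolding \<mu>_def using s by (simp add: sums_iff)
    finally show "(\<Sum>i. \<mu> (A i)) = \<mu> (\<Union> (range A))" .
  qed
  define \<nu> where "\<nu> = measure_of UNIV (sets lebesgue) \<mu>"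
  have emeasure_\<nu>: "emeasure \<nu> A = \<mu> A" if "A \<in> sets lebesgue" for A
    unfolding \<nu>_def by (rule emeasure_measure_of_sigma[OF sa pos ca that])
  have sets_\<nu>: "sets \<nu> = sets lebesgue"
    unfolding \<nu>_def using sigma_algebra.sigma_sets_eq[OF sa] by (simp add: sets_measure_of)
  have "absolutely_continuous lebesgue \<nu>"
    unfolding absolutely_continuous_def
  proof
    fix A :: "real set" assume A: "A \<in> null_sets lebesgue"
    then have "\<Lambda> (indicator A) = \<Lambda> (\<lambda>t. 0)"
      by (intro cong_negligible[of _ _ A]) (auto simp: sq_int_indicator sq_int_const negligible_iff_null_sets)
    with A show "A \<in> null_sets \<nu>"
      using emeasure_\<nu> sets_\<nu> zero by (simp add: \<mu>_def null_sets_def)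
  qed
  then obtain f where f: "f \<in> borel_measurable lebesgue" and f_density: "density lebesgue f = \<nu>"
    using sigma_finite_measure.Radon_Nikodym[OF sigma_finite_measure_lebesgue _ sets_\<nu>] by blast
  show thesis
  proof (rule that[OF f])
    fix A :: "real set" assume "A \<in> sets lebesgue"
    then show "(\<integral>\<^sup>+x. f x * indicator A x \<partial>lebesgue) = ennreal (\<Lambda> (indicator A))"
      using emeasure_density[OF f] f_density emeasure_\<nu> by (simp add: \<mu>_def)
  qed
qed

lemma density_le:
  assumes f [measurable]: "f \<in> borel_measurable lebesgue"
    and f_density: "\<And>A. A \<in> sets lebesgue \<Longrightarrow> (\<integral>\<^sup>+x. f x * indicator A x \<partial>lebesgue) = ennreal (\<Lambda> (indicator A))"
  shows "AE x in lebesgue. f x \<le> ennreal (C * indicator I_T x)"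
proof -
  have [measurable]: "Measurable.pred lebesgue (\<lambda>x. x \<in> I_T)"
    unfolding pred_def by simp
  have integral_bound: "(\<integral>\<^sup>+x. ennreal (C * indicator I_T x) * indicator A x \<partial>lebesgue)
      = ennreal (C * measure lebesgue (A \<inter> I_T))" if A: "A \<in> sets lebesgue" for A
  proof -
    have fin: "A \<inter> I_T \<in> fmeasurable lebesgue"
      using fmeasurable_Int_fmeasurable[of I_T lebesgue A] A by (simp add: Int_commute)
    have "(\<integral>\<^sup>+x. ennreal (C * indicator I_T x) * indicator A x \<partial>lebesgue)
        = (\<integral>\<^sup>+x. ennreal C * indicator (A \<inter> I_T) x \<partial>lebesgue)"
      by (intro nn_integral_cong) (simp add: indicator_def)
    also have "\<dots> = ennreal C * emeasure lebesgue (A \<inter> I_T)"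
      using fin by (intro nn_integral_cmult_indicator) auto
    also have "\<dots> = ennreal (C * measure lebesgue (A \<inter> I_T))"
      using fin bound_nonneg by (simp add: emeasure_eq_measure2 ennreal_mult)
    finally show ?thesis .
  qed
  show ?thesis
  proof (rule AE_le_if_set_nn_integral_le[OF f])
    show "(\<lambda>x. ennreal (C * indicator I_T x)) \<in> borel_measurable lebesgue"
      by measurable
    show "(\<integral>\<^sup>+x. ennreal (C * indicator I_T x) \<partial>lebesgue) \<noteq> \<infinity>"
      using integral_bound[of UNIV] by simp
    fix A :: "real set" assume A: "A \<in> sets lebesgue"
    have "(\<lambda>t. \<bar>indicator A t :: real\<bar>) = indicator A"
      by (auto simp: indicator_def)
    then have "\<Lambda> (indicator A) \<le> C * integral I_T (indicator A)"
      using bounded[OF sq_int_indicator[OF A]] by simp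
    also have "integral I_T (indicator A) = measure lebesgue (A \<inter> I_T)"
      using fmeasurable_Int_fmeasurable[of I_T lebesgue A] A
      by (intro integral_indicator) (simp add: Int_commute)
    finally show "(\<integral>\<^sup>+x. f x * indicator A x \<partial>lebesgue)
        \<le> (\<integral>\<^sup>+x. ennreal (C * indicator I_T x) * indicator A x \<partial>lebesgue)"
      unfolding f_density[OF A] integral_bound[OF A] by (rule ennreal_leI)
  qed
qed

lemma bounded_density:
  assumes nonneg: "\<And>A. A \<in> sets lebesgue \<Longrightarrow> 0 \<le> \<Lambda> (indicator A)"
  obtains f where "f \<in> borel_measurable lebesgue" and "\<And>x. f x \<le> ennreal C"
    and "\<And>A. A \<in> sets lebesgue \<Longrightarrow> (\<integral>\<^sup>+x. f x * indicator A x \<partial>lebesgue) = ennreal (\<Lambda> (indicator A))"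
proof -
  obtain f where f [measurable]: "f \<in> borel_measurable lebesgue"
    and f_density: "\<And>A. A \<in> sets lebesgue \<Longrightarrow> (\<integral>\<^sup>+x. f x * indicator A x \<partial>lebesgue) = ennreal (\<Lambda> (indicator A))"
    using indicator_density[OF nonneg] by blast
  have "AE x in lebesgue. f x \<le> ennreal (C * indicator I_T x)"
    using f f_density by (rule density_le)
  then have "AE x in lebesgue. min (f x) (ennreal C) = f x"
  proof eventually_elim
    case (elim x)
    have "ennreal (C * indicator I_T x) \<le> ennreal C"
      using bound_nonneg by (intro ennreal_leI) (simp add: indicator_def)
    with elim show ?case
      by (simp add: min_absorb1)
  qed
  then have "(\<integral>\<^sup>+x. min (f x) (ennreal C) * indicator A x \<partial>lebesgue) = (\<integral>\<^sup>+x. f x * indicator A x \<partial>lebesgue)"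
    for A by (intro nn_integral_cong_AE) (auto elim: eventually_mono)
  then show thesis
    using that[of "\<lambda>x. min (f x) (ennreal C)"] f_density by simp
qed

lemma integral_bounded_density:
  assumes nonneg: "\<And>A. A \<in> sets lebesgue \<Longrightarrow> 0 \<le> \<Lambda> (indicator A)"
    and f [measurable]: "f \<in> borel_measurable lebesgue" and f_le: "\<And>x. f x \<le> ennreal C"
    and f_density: "\<And>A. A \<in> sets lebesgue \<Longrightarrow> (\<integral>\<^sup>+x. f x * indicator A x \<partial>lebesgue) = ennreal (\<Lambda> (indicator A))"
    and A: "A \<in> sets lebesgue"
  shows "\<Lambda> (indicator A) = integral I_T (\<lambda>t. enn2real (f t) * indicator A t)"
proof -
  have AI: "A \<inter> I_T \<in> sets lebesgue"
    using A by auto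
  define h where "h x = enn2real (f x) * indicator (A \<inter> I_T) x" for x
  have h_meas: "h \<in> borel_measurable lebesgue"
    unfolding h_def using AI by measurable
  have "ennreal (h x) = f x * indicator (A \<inter> I_T) x" for x
  proof -
    have "f x < top"
      using f_le[of x] ennreal_less_top le_less_trans by blast
    then show ?thesis
      by (simp add: h_def indicator_def)
  qed
  then have "(\<integral>\<^sup>+x. ennreal (h x) \<partial>lebesgue) = ennreal (\<Lambda> (indicator (A \<inter> I_T)))"
    using f_density[OF AI] by simp
  also have "\<Lambda> (indicator (A \<inter> I_T)) = \<Lambda> (indicator A)"
    by (rule cong_negligible[of _ _ "{}"]) (auto simp: sq_int_indicator A AI indicator_def)
  finally have "(h has_integral \<Lambda> (indicator A)) UNIV"
    using has_integral_iff_nn_integral_lebesgue[of h] h_meas nonneg[OF A] by (simp add: h_def)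
  moreover have "h = (\<lambda>x. if x \<in> I_T then enn2real (f x) * indicator A x else 0)"
    by (auto simp: h_def indicator_def fun_eq_iff)
  ultimately have "((\<lambda>t. enn2real (f t) * indicator A t) has_integral \<Lambda> (indicator A)) I_T"
    by (simp only: has_integral_restrict_UNIV)
  then show ?thesis
    by (rule integral_unique[symmetric])
qed

lemma eq_integral_if_eq_on_indicators:
  assumes g [measurable]: "g \<in> borel_measurable lebesgue" and g_le: "\<And>t. \<bar>g t\<bar> \<le> c"
    and ind: "\<And>A. A \<in> sets lebesgue \<Longrightarrow> \<Lambda> (indicator A) = integral I_T (\<lambda>t. g t * indicator A t)"
    and f: "sq_int f"
  shows "\<Lambda> f = integral I_T (\<lambda>t. g t * f t)"
proof -
  define D where "D h = \<Lambda> h - integral I_T (\<lambda>t. g t * h t)" for h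
  interpret D: L1_bounded_functional D "C + c"
  proof
    show "0 \<le> C + c"
      using bound_nonneg g_le[of 0] by linarith
    fix h1 h2 a b assume h: "sq_int h1" "sq_int h2"
    show "D (\<lambda>t. a * h1 t + b * h2 t) = a * D h1 + b * D h2"
      unfolding D_def linear[OF h] integral_mult_lincomb[OF sq_intI_bounded_lebesgue[OF g g_le] h]
      by (simp add: algebra_simps)
  next
    fix h assume h: "sq_int h"
    show "\<bar>D h\<bar> \<le> (C + c) * integral I_T (\<lambda>t. \<bar>h t\<bar>)"
      unfolding D_def using bounded[OF h] integral_mult_bounded_measurable(2)[OF g g_le h]
      by (simp add: algebra_simps)
  qed
  have "D f = 0"
    by (rule D.eq_0_if_indicator_eq_0[OF _ f]) (simp add: D_def ind)
  then show ?thesis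
    by (simp add: D_def)
qed

lemma shift_by_integral: "L1_bounded_functional (\<lambda>f. \<Lambda> f + C * integral I_T f) (2 * C)"
proof
  show "0 \<le> 2 * C"
    using bound_nonneg by simp
  fix f g a b assume "sq_int f" "sq_int g"
  then show "\<Lambda> (\<lambda>t. a * f t + b * g t) + C * integral I_T (\<lambda>t. a * f t + b * g t)
      = a * (\<Lambda> f + C * integral I_T f) + b * (\<Lambda> g + C * integral I_T g)"
    using linear by (simp add: integral_add integrable_on_mult_right sq_int_integrable algebra_simps)
next
  fix f assume f: "sq_int f"
  have "\<bar>integral I_T f\<bar> \<le> integral I_T (\<lambda>t. \<bar>f t\<bar>)"
    using integral_norm_bound_integral[OF sq_int_integrable[OF f] sq_int_abs_integrable[OF f]] by simp
  then have "\<bar>C * integral I_T f\<bar> \<le> C * integral I_T (\<lambda>t. \<bar>f t\<bar>)"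
    using bound_nonneg by (simp add: abs_mult mult_left_mono)
  then show "\<bar>\<Lambda> f + C * integral I_T f\<bar> \<le> 2 * C * integral I_T (\<lambda>t. \<bar>f t\<bar>)"
    using bounded[OF f] by linarith
qed

lemma shift_by_integral_indicator_nonneg:
  assumes A: "A \<in> sets lebesgue"
  shows "0 \<le> \<Lambda> (indicator A) + C * integral I_T (indicator A)"
proof -
  have "(\<lambda>t. \<bar>indicator A t :: real\<bar>) = indicator A"
    by (auto simp: indicator_def)
  then have "\<bar>\<Lambda> (indicator A)\<bar> \<le> C * integral I_T (indicator A)"
    using bounded[OF sq_int_indicator[OF A]] by simp
  then show ?thesis
    by linarith
qed

theorem integral_representation:
  obtains g where "g \<in> borel_measurable lebesgue" and "\<And>t. \<bar>g t\<bar> \<le> C"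
    and "\<And>f. sq_int f \<Longrightarrow> \<Lambda> f = integral I_T (\<lambda>t. g t * f t)"
proof -
  \<comment> \<open>The shifted functional is nonnegative on indicators, hence defines a measure.\<close>
  define \<Lambda>' where "\<Lambda>' f = \<Lambda> f + C * integral I_T f" for f
  interpret shifted: L1_bounded_functional \<Lambda>' "2 * C"
    unfolding \<Lambda>'_def[abs_def] by (rule shift_by_integral)
  have nonneg: "0 \<le> \<Lambda>' (indicator A)" if "A \<in> sets lebesgue" for A
    unfolding \<Lambda>'_def by (rule shift_by_integral_indicator_nonneg[OF that])
  obtain f where f [measurable]: "f \<in> borel_measurable lebesgue" and f_le: "\<And>x. f x \<le> ennreal (2 * C)"
    and f_density: "\<And>A. A \<in> sets lebesgue \<Longrightarrow>
        (\<integral>\<^sup>+x. f x * indicator A x \<partial>lebesgue) = ennreal (\<Lambda>' (indicator A))"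
    using shifted.bounded_density[OF nonneg] by blast
  define g where "g t = enn2real (f t) - C" for t
  have g_meas: "g \<in> borel_measurable lebesgue"
    unfolding g_def by measurable
  have f_real_le: "\<bar>enn2real (f t)\<bar> \<le> 2 * C" for t
    using enn2real_leI[OF _ f_le[of t]] bound_nonneg by simp
  have g_le: "\<bar>g t\<bar> \<le> C" for t
    using f_real_le[of t] by (simp add: g_def abs_le_iff)
  have "\<Lambda> (indicator A) = integral I_T (\<lambda>t. g t * indicator A t)" if A: "A \<in> sets lebesgue" for A
  proof -
    have "\<Lambda>' (indicator A) = integral I_T (\<lambda>t. enn2real (f t) * indicator A t)"
      by (rule shifted.integral_bounded_density[OF nonneg f f_le f_density A])
    moreover have "integral I_T (\<lambda>t. g t * indicator A t)
        = integral I_T (\<lambda>t. enn2real (f t) * indicator A t) - C * integral I_T (indicator A)"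
      unfolding g_def left_diff_distrib
      using integral_mult_bounded_measurable(1)[OF _ f_real_le sq_int_indicator[OF A]]
        sq_int_integrable[OF sq_int_indicator[OF A]]
      by (subst integral_diff) (auto intro: integrable_on_mult_right)
    ultimately show ?thesis
      by (simp add: \<Lambda>'_def)
  qed
  with g_meas g_le show thesis
    using that eq_integral_if_eq_on_indicators by blast
qed

end

section \<open>Weak compactness of K2\<close>

lemma K2_subset_U_space: "K2 \<subseteq> U_space"
  by (auto simp: K2_def)

lemma U_space_iff: "u \<in> U_space \<longleftrightarrow> sq_int (fst u) \<and> sq_int (snd u)"
  by (simp add: U_space_def)

lemma sets_lebesgue_I_T: "I_T \<inter> space lebesgue \<in> sets lebesgue"
  by simp

lemma K2_boundsE:
  assumes "u \<in> K2"
  obtains N where "negligible N" "\<And>t. t \<in> I_T - N \<Longrightarrow> \<bar>fst u t\<bar> \<le> 0.8 \<and> \<bar>snd u t\<bar> \<le> 0.4"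
proof -
  have "AE t in lebesgue_on I_T. \<bar>fst u t\<bar> \<le> 0.8 \<and> \<bar>snd u t\<bar> \<le> 0.4"
    using assms by (simp add: K2_def)
  then have "AE t in lebesgue. t \<in> I_T \<longrightarrow> \<bar>fst u t\<bar> \<le> 0.8 \<and> \<bar>snd u t\<bar> \<le> 0.4"
    by (subst (asm) AE_restrict_space_iff) auto
  then show ?thesis
    using that by (auto simp: eventually_ae_filter_negligible)
qed

lemma ipU_integrable:
  "u \<in> U_space \<Longrightarrow> v \<in> U_space \<Longrightarrow> (\<lambda>t. fst u t * fst v t + snd u t * snd v t) integrable_on I_T"
  by (auto simp: U_space_iff intro!: integrable_add sq_int_mult_integrable)

lemma abs_ipU_le:
  assumes u: "u \<in> K2" and v: "v \<in> U_space"
  shows "\<bar>ipU u v\<bar> \<le> integral I_T (\<lambda>t. \<bar>fst v t\<bar> + \<bar>snd v t\<bar>)"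
proof -
  obtain N where N: "negligible N" "\<And>t. t \<in> I_T - N \<Longrightarrow> \<bar>fst u t\<bar> \<le> 0.8 \<and> \<bar>snd u t\<bar> \<le> 0.4"
    using K2_boundsE[OF u] by blast
  show ?thesis
    unfolding ipU_def
  proof (rule abs_integral_le_AE[OF N(1)])
    fix t assume t: "t \<in> I_T - N"
    have "\<bar>fst u t * fst v t\<bar> \<le> \<bar>fst v t\<bar>" "\<bar>snd u t * snd v t\<bar> \<le> \<bar>snd v t\<bar>"
      using N(2)[OF t] by (simp_all add: abs_mult mult_left_le_one_le)
    then show "\<bar>fst u t * fst v t + snd u t * snd v t\<bar> \<le> \<bar>fst v t\<bar> + \<bar>snd v t\<bar>"
      by linarith
  next
    show "(\<lambda>t. fst u t * fst v t + snd u t * snd v t) integrable_on I_T"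
      using u v K2_subset_U_space by (intro ipU_integrable) auto
  next
    show "(\<lambda>t. \<bar>fst v t\<bar> + \<bar>snd v t\<bar>) integrable_on I_T"
      using v by (auto simp: U_space_iff intro!: integrable_add sq_int_abs_integrable)
  qed
qed

lemma negligible_if_integral_nonneg_eq_0:
  fixes f :: "real \<Rightarrow> real"
  assumes f: "f integrable_on I_T" and nonneg: "\<And>t. t \<in> I_T \<Longrightarrow> 0 \<le> f t" and zero: "integral I_T f = 0"
  obtains N where "negligible N" "\<And>t. t \<in> I_T - N \<Longrightarrow> f t = 0"
proof -
  have "f absolutely_integrable_on I_T"
    by (rule nonnegative_absolutely_integrable_1[OF f nonneg])
  then have m: "f \<in> borel_measurable (lebesgue_on I_T)"
    and i: "integrable (lebesgue_on I_T) f"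
    using absolutely_integrable_measurable_real[of I_T f] integrable_abs_iff by auto
  have "integral\<^sup>L (lebesgue_on I_T) f = 0"
    using lebesgue_integral_eq_integral[OF i] zero by simp
  moreover have "AE x in lebesgue_on I_T. 0 \<le> f x"
    by (rule AE_I2) (use nonneg in auto)
  ultimately have "AE x in lebesgue_on I_T. f x = 0"
    using integral_nonneg_eq_0_iff_AE[OF i] by simp
  then have "AE x in lebesgue. x \<in> I_T \<longrightarrow> f x = 0"
    using AE_restrict_space_iff[of I_T lebesgue] by simp
  then show ?thesis
    using that by (auto simp: eventually_ae_filter_negligible)
qed

lemma K2_saturated:
  assumes x: "x \<in> U_space" and u: "u \<in> K2" and eq: "\<And>v. v \<in> U_space \<Longrightarrow> ipU x v = ipU u v"
  shows "x \<in> K2"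
proof -
  have uU: "u \<in> U_space"
    using u K2_subset_U_space by blast
  define v where "v = ((\<lambda>t. fst x t - fst u t), (\<lambda>t. snd x t - snd u t))"
  have vU: "v \<in> U_space"
    using x uU by (simp add: v_def U_space_iff sq_int_diff)
  define d where "d t = (fst x t - fst u t)\<^sup>2 + (snd x t - snd u t)\<^sup>2" for t
  have d_eq: "d t = (fst x t * fst v t + snd x t * snd v t) - (fst u t * fst v t + snd u t * snd v t)" for t
    by (simp add: d_def v_def power2_eq_square algebra_simps)
  have d_int: "d integrable_on I_T"
    unfolding d_eq by (intro integrable_diff ipU_integrable x uU vU)
  have "integral I_T d = ipU x v - ipU u v"
    unfolding d_eq ipU_def by (intro integral_diff ipU_integrable x uU vU)
  then have "integral I_T d = 0"
    using eq[OF vU] by simp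
  then obtain N where N: "negligible N" "\<And>t. t \<in> I_T - N \<Longrightarrow> d t = 0"
    using negligible_if_integral_nonneg_eq_0[OF d_int] by (auto simp: d_def)
  obtain N' where N': "negligible N'" "\<And>t. t \<in> I_T - N' \<Longrightarrow> \<bar>fst u t\<bar> \<le> 0.8 \<and> \<bar>snd u t\<bar> \<le> 0.4"
    using K2_boundsE[OF u] by blast
  have "\<bar>fst x t\<bar> \<le> 0.8 \<and> \<bar>snd x t\<bar> \<le> 0.4" if "t \<in> I_T - (N \<union> N')" for t
  proof -
    have "fst x t = fst u t" "snd x t = snd u t"
      using N(2)[of t] that by (auto simp: d_def add_nonneg_eq_0_iff)
    with N'(2)[of t] that show ?thesis
      by auto
  qed
  then have "AE t in lebesgue_on I_T. \<bar>fst x t\<bar> \<le> 0.8 \<and> \<bar>snd x t\<bar> \<le> 0.4"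
    using N(1) N'(1) unfolding AE_restrict_space_iff[OF sets_lebesgue_I_T] eventually_ae_filter_negligible
    by (intro exI[of _ "N \<union> N'"]) auto
  with x show ?thesis
    unfolding K2_def by blast
qed

definition weakly_adherent :: "ctrl set \<Rightarrow> (ctrl \<Rightarrow> real) \<Rightarrow> bool" where
  "weakly_adherent S L \<longleftrightarrow>
     (\<forall>J e. finite J \<longrightarrow> J \<subseteq> U_space \<longrightarrow> 0 < e \<longrightarrow> (\<exists>w\<in>S. \<forall>v\<in>J. \<bar>ipU w v - L v\<bar> < e))"

lemma weakly_adherentD:
  "weakly_adherent S L \<Longrightarrow> finite J \<Longrightarrow> J \<subseteq> U_space \<Longrightarrow> 0 < e \<Longrightarrow> \<exists>w\<in>S. \<forall>v\<in>J. \<bar>ipU w v - L v\<bar> < e"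
  unfolding weakly_adherent_def by blast

lemma weakly_adherent_linear:
  assumes L: "weakly_adherent S L" and v: "v1 \<in> U_space" "v2 \<in> U_space" "v3 \<in> U_space"
    and rel: "\<And>w. w \<in> S \<Longrightarrow> ipU w v3 = a * ipU w v1 + b * ipU w v2"
  shows "L v3 = a * L v1 + b * L v2"
proof -
  define K where "K = 1 + \<bar>a\<bar> + \<bar>b\<bar>"
  have K: "0 < K"
    unfolding K_def by (simp add: add_pos_nonneg)
  have "\<bar>L v3 - (a * L v1 + b * L v2)\<bar> \<le> 0"
  proof (rule field_le_epsilon)
    fix e :: real assume e: "0 < e"
    obtain w where w: "w \<in> S" and close: "\<forall>v\<in>{v1, v2, v3}. \<bar>ipU w v - L v\<bar> < e / K"
      using weakly_adherentD[OF L, of "{v1, v2, v3}" "e / K"] v e K by auto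
    have "L v3 - (a * L v1 + b * L v2)
        = (L v3 - ipU w v3) - a * (L v1 - ipU w v1) - b * (L v2 - ipU w v2)"
      using rel[OF w] by (simp add: algebra_simps)
    then have "\<bar>L v3 - (a * L v1 + b * L v2)\<bar>
        \<le> \<bar>L v3 - ipU w v3\<bar> + \<bar>a\<bar> * \<bar>L v1 - ipU w v1\<bar> + \<bar>b\<bar> * \<bar>L v2 - ipU w v2\<bar>"
      unfolding abs_mult[symmetric] by (smt (verit))
    also have "\<dots> \<le> e / K + \<bar>a\<bar> * (e / K) + \<bar>b\<bar> * (e / K)"
      using close by (intro add_mono mult_left_mono) (auto simp: abs_minus_commute less_imp_le)
    also have "\<dots> = K * (e / K)"
      by (simp only: K_def distrib_right mult_1_left)
    also have "\<dots> = 0 + e"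
      using K by simp
    finally show "\<bar>L v3 - (a * L v1 + b * L v2)\<bar> \<le> 0 + e" .
  qed
  then show ?thesis
    by (simp only: abs_le_zero_iff right_minus_eq)
qed

lemma weakly_adherent_bound:
  assumes L: "weakly_adherent S L" and v: "v \<in> U_space" and bound: "\<And>w. w \<in> S \<Longrightarrow> \<bar>ipU w v\<bar> \<le> B"
  shows "\<bar>L v\<bar> \<le> B"
proof (rule field_le_epsilon)
  fix e :: real assume e: "0 < e"
  obtain w where "w \<in> S" "\<bar>ipU w v - L v\<bar> < e"
    using weakly_adherentD[OF L, of "{v}" e] v e by auto
  with bound show "\<bar>L v\<bar> \<le> B + e"
    by (smt (verit))
qed

lemma weakly_adherent_component_functional:
  assumes L: "weakly_adherent S L" and S: "S \<subseteq> K2" and c: "0 \<le> c"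
    and emb: "\<And>f. sq_int f \<Longrightarrow> \<iota> f \<in> U_space"
    and ip: "\<And>w f. w \<in> K2 \<Longrightarrow> ipU w (\<iota> f) = integral I_T (\<lambda>t. \<pi> w t * f t)"
    and \<pi>: "\<And>w. w \<in> K2 \<Longrightarrow> sq_int (\<pi> w)"
    and \<pi>_le: "\<And>w. w \<in> K2 \<Longrightarrow> \<exists>N. negligible N \<and> (\<forall>t\<in>I_T - N. \<bar>\<pi> w t\<bar> \<le> c)"
  shows "L1_bounded_functional (\<lambda>f. L (\<iota> f)) c"
proof
  fix f g a b assume fg: "sq_int f" "sq_int g"
  show "L (\<iota> (\<lambda>t. a * f t + b * g t)) = a * L (\<iota> f) + b * L (\<iota> g)"
  proof (rule weakly_adherent_linear[OF L emb[OF fg(1)] emb[OF fg(2)] emb[OF sq_int_lincomb[OF fg]]])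
    fix w assume "w \<in> S"
    with S have w: "w \<in> K2"
      by blast
    show "ipU w (\<iota> (\<lambda>t. a * f t + b * g t)) = a * ipU w (\<iota> f) + b * ipU w (\<iota> g)"
      unfolding ip[OF w] by (rule integral_mult_lincomb[OF \<pi>[OF w] fg])
  qed
next
  fix f assume f: "sq_int f"
  show "\<bar>L (\<iota> f)\<bar> \<le> c * integral I_T (\<lambda>t. \<bar>f t\<bar>)"
  proof (rule weakly_adherent_bound[OF L emb[OF f]])
    fix w assume "w \<in> S"
    with S have w: "w \<in> K2"
      by blast
    from \<pi>_le[OF w] obtain N where N: "negligible N" "\<forall>t\<in>I_T - N. \<bar>\<pi> w t\<bar> \<le> c"
      by blast
    show "\<bar>ipU w (\<iota> f)\<bar> \<le> c * integral I_T (\<lambda>t. \<bar>f t\<bar>)"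
      unfolding ip[OF w] by (rule abs_integral_mult_le_AE[OF \<pi>[OF w] f N(1)]) (use N(2) in blast)
  qed
qed (fact c)

lemma weakly_adherent_represented_in_K2:
  assumes L: "weakly_adherent S L" and S: "S \<subseteq> K2"
  shows "\<exists>u\<in>K2. \<forall>v\<in>U_space. ipU u v = L v"
proof -
  have K2_sq_int: "sq_int (fst w)" "sq_int (snd w)" if "w \<in> K2" for w
    using that K2_subset_U_space by (auto simp: U_space_iff)
  have fst_le: "\<exists>N. negligible N \<and> (\<forall>t\<in>I_T - N. \<bar>fst w t\<bar> \<le> 0.8)"
    and snd_le: "\<exists>N. negligible N \<and> (\<forall>t\<in>I_T - N. \<bar>snd w t\<bar> \<le> 0.4)" if "w \<in> K2" for w
    by (rule K2_boundsE[OF that], blast)+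
  interpret L1: L1_bounded_functional "\<lambda>f. L (f, \<lambda>t. 0)" "0.8"
    by (rule weakly_adherent_component_functional[OF L S _ _ _ K2_sq_int(1) fst_le])
      (simp_all add: U_space_iff sq_int_const ipU_def)
  interpret L2: L1_bounded_functional "\<lambda>f. L (\<lambda>t. 0, f)" "0.4"
    by (rule weakly_adherent_component_functional[OF L S _ _ _ K2_sq_int(2) snd_le])
      (simp_all add: U_space_iff sq_int_const ipU_def)
  obtain g1 where g1: "g1 \<in> borel_measurable lebesgue" "\<And>t. \<bar>g1 t\<bar> \<le> 0.8"
      "\<And>f. sq_int f \<Longrightarrow> L (f, \<lambda>t. 0) = integral I_T (\<lambda>t. g1 t * f t)"
    using L1.integral_representation by blast
  obtain g2 where g2: "g2 \<in> borel_measurable lebesgue" "\<And>t. \<bar>g2 t\<bar> \<le> 0.4"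
      "\<And>f. sq_int f \<Longrightarrow> L (\<lambda>t. 0, f) = integral I_T (\<lambda>t. g2 t * f t)"
    using L2.integral_representation by blast
  have uK2: "(g1, g2) \<in> K2"
    using sq_intI_bounded_lebesgue[OF g1(1,2)] sq_intI_bounded_lebesgue[OF g2(1,2)] g1(2) g2(2)
    by (auto simp: K2_def U_space_iff intro!: AE_I2)
  have "\<forall>v\<in>U_space. ipU (g1, g2) v = L v"
  proof
    fix v assume v: "v \<in> U_space"
    have v12: "sq_int (fst v)" "sq_int (snd v)"
      using v by (auto simp: U_space_iff)
    have "L v = 1 * L (fst v, \<lambda>t. 0) + 1 * L (\<lambda>t. 0, snd v)"
    proof (rule weakly_adherent_linear[OF L])
      show "(fst v, \<lambda>t. 0) \<in> U_space" "(\<lambda>t. 0, snd v) \<in> U_space"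
        using v12 by (auto simp: U_space_iff sq_int_const)
      show "ipU w v = 1 * ipU w (fst v, \<lambda>t. 0) + 1 * ipU w (\<lambda>t. 0, snd v)" if "w \<in> S" for w
      proof -
        have "sq_int (fst w)" "sq_int (snd w)"
          using K2_sq_int[of w] that S by auto
        with v12 show ?thesis
          unfolding ipU_def by (subst integral_add) (auto intro: sq_int_mult_integrable)
      qed
    qed fact
    also have "\<dots> = ipU (g1, g2) v"
      using g1(3)[OF v12(1)] g2(3)[OF v12(2)]
        integral_mult_bounded_measurable(1)[OF g1(1,2) v12(1)] integral_mult_bounded_measurable(1)[OF g2(1,2) v12(2)]
      unfolding ipU_def by (subst integral_add) auto
    finally show "ipU (g1, g2) v = L v"
      by simp
  qed
  with uK2 show ?thesis
    by (rule bexI[rotated])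
qed

definition weak_coords :: "ctrl \<Rightarrow> ctrl \<Rightarrow> real" where
  "weak_coords u = restrict (\<lambda>v. ipU u v) U_space"

lemma weak_topU_eq_pullback:
  "weak_topU = pullback_topology U_space weak_coords (product_topology (\<lambda>_. euclideanreal) U_space)"
  by (simp add: weak_topU_def weak_coords_def[abs_def])

lemma weak_coords_in_topspace:
  "weak_coords ` A \<subseteq> topspace (product_topology (\<lambda>_. euclideanreal) U_space)"
  unfolding weak_coords_def by (simp add: image_subset_iff)

lemma closedin_weak_coords_K2:
  "closedin (product_topology (\<lambda>_. euclideanreal) U_space) (weak_coords ` K2)"
proof (rule closedin_product_topology_realI[OF weak_coords_in_topspace])
  fix L assume L_ext: "L \<in> extensional U_space"
    and close: "\<And>J e. finite J \<Longrightarrow> J \<subseteq> U_space \<Longrightarrow> 0 < e \<Longrightarrow>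
        \<exists>g\<in>weak_coords ` K2. \<forall>v\<in>J. \<bar>g v - L v\<bar> < e"
  have "weakly_adherent K2 L"
    unfolding weakly_adherent_def
  proof (intro allI impI)
    fix J and e :: real assume J: "finite J" "J \<subseteq> U_space" and e: "0 < e"
    from close[OF J e] obtain w where w: "w \<in> K2" and close_w: "\<forall>v\<in>J. \<bar>weak_coords w v - L v\<bar> < e"
      by blast
    have "\<forall>v\<in>J. \<bar>ipU w v - L v\<bar> < e"
    proof
      fix v assume "v \<in> J"
      then show "\<bar>ipU w v - L v\<bar> < e"
        using bspec[OF close_w] subsetD[OF J(2)] by (simp add: weak_coords_def)
    qed
    with w show "\<exists>w\<in>K2. \<forall>v\<in>J. \<bar>ipU w v - L v\<bar> < e" ..
  qed
  from weakly_adherent_represented_in_K2[OF this order_refl]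
  obtain u where u: "u \<in> K2" and rep: "\<forall>v\<in>U_space. ipU u v = L v"
    by blast
  have "weak_coords u = L"
  proof
    fix v
    show "weak_coords u v = L v"
      using rep extensional_arb[OF L_ext, of v] by (cases "v \<in> U_space") (simp_all add: weak_coords_def)
  qed
  from this u show "L \<in> weak_coords ` K2"
    by (rule image_eqI[OF sym])
qed

lemma weak_coords_K2_subset:
  "weak_coords ` K2 \<subseteq> (\<Pi>\<^sub>E v\<in>U_space. {-integral I_T (\<lambda>t. \<bar>fst v t\<bar> + \<bar>snd v t\<bar>)..
                                        integral I_T (\<lambda>t. \<bar>fst v t\<bar> + \<bar>snd v t\<bar>)})"
proof (rule image_subsetI)
  fix u assume u: "u \<in> K2"
  show "weak_coords u \<in> (\<Pi>\<^sub>E v\<in>U_space. {-integral I_T (\<lambda>t. \<bar>fst v t\<bar> + \<bar>snd v t\<bar>)..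
                                                integral I_T (\<lambda>t. \<bar>fst v t\<bar> + \<bar>snd v t\<bar>)})"
  proof (rule PiE_I)
    fix v assume v: "v \<in> U_space"
    with abs_ipU_le[OF u v] show "weak_coords u v \<in> {-integral I_T (\<lambda>t. \<bar>fst v t\<bar> + \<bar>snd v t\<bar>)..
                                               integral I_T (\<lambda>t. \<bar>fst v t\<bar> + \<bar>snd v t\<bar>)}"
      by (simp add: weak_coords_def abs_le_iff)
  qed (simp add: weak_coords_def)
qed

theorem weakly_compact_K2: "compactin weak_topU K2 \<and> closedin weak_topU K2"
proof -
  let ?P = "product_topology (\<lambda>_::ctrl. euclideanreal) U_space"
  have "compactin ?P (\<Pi>\<^sub>E v\<in>U_space. {-integral I_T (\<lambda>t. \<bar>fst v t\<bar> + \<bar>snd v t\<bar>)..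
                                      integral I_T (\<lambda>t. \<bar>fst v t\<bar> + \<bar>snd v t\<bar>)})"
    by (simp add: compactin_PiE)
  then have "compactin ?P (weak_coords ` K2)"
    by (rule closed_compactin[OF _ weak_coords_K2_subset closedin_weak_coords_K2])
  then have "compactin weak_topU K2"
    unfolding weak_topU_eq_pullback by (rule compactin_pullback_topology[OF K2_subset_U_space])
  moreover have "closedin weak_topU K2"
    unfolding weak_topU_eq_pullback
  proof (rule closedin_pullback_topology[OF K2_subset_U_space weak_coords_in_topspace closedin_weak_coords_K2])
    show "x \<in> K2" if "x \<in> U_space" "u \<in> K2" "weak_coords x = weak_coords u" for x u
    proof (rule K2_saturated[OF that(1,2)])
      show "ipU x v = ipU u v" if "v \<in> U_space" for v
        using fun_cong[OF \<open>weak_coords x = weak_coords u\<close>, of v] that by (simp add: weak_coords_def)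
    qed
  qed
  ultimately show ?thesis ..
qed

section \<open>Weak continuity of h on K2\<close>

definition weak_nhds_K2 :: "ctrl \<Rightarrow> ctrl filter" where
  "weak_nhds_K2 u = (INF p\<in>{p. finite (fst p) \<and> fst p \<subseteq> U_space \<and> (0::real) < snd p}.
     principal {w \<in> K2. \<forall>v\<in>fst p. \<bar>ipU w v - ipU u v\<bar> < snd p})"

lemma eventually_weak_nhds_K2:
  "eventually P (weak_nhds_K2 u) \<longleftrightarrow>
     (\<exists>J \<delta>. finite J \<and> J \<subseteq> U_space \<and> 0 < \<delta> \<and> (\<forall>w\<in>K2. (\<forall>v\<in>J. \<bar>ipU w v - ipU u v\<bar> < \<delta>) \<longrightarrow> P w))"
proof -
  let ?B = "{p. finite (fst p) \<and> fst p \<subseteq> U_space \<and> (0::real) < snd p}"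
  let ?F = "\<lambda>p. principal {w \<in> K2. \<forall>v\<in>fst p. \<bar>ipU w v - ipU u v\<bar> < snd p}"
  have "eventually P (weak_nhds_K2 u) \<longleftrightarrow> (\<exists>p\<in>?B. eventually P (?F p))"
    unfolding weak_nhds_K2_def
  proof (rule eventually_INF_base)
    have "({}, 1) \<in> ?B"
      by simp
    then show "?B \<noteq> {}"
      by blast
    fix p q assume "p \<in> ?B" "q \<in> ?B"
    then show "\<exists>x\<in>?B. ?F x \<le> inf (?F p) (?F q)"
      by (intro bexI[of _ "(fst p \<union> fst q, min (snd p) (snd q))"]) auto
  qed
  also have "\<dots> \<longleftrightarrow> (\<exists>J \<delta>. finite J \<and> J \<subseteq> U_space \<and> 0 < \<delta> \<and>
      (\<forall>w\<in>K2. (\<forall>v\<in>J. \<bar>ipU w v - ipU u v\<bar> < \<delta>) \<longrightarrow> P w))"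
    unfolding eventually_principal by force
  finally show ?thesis .
qed

lemma eventually_weak_nhds_K2_in_K2: "eventually (\<lambda>w. w \<in> K2) (weak_nhds_K2 u)"
  unfolding eventually_weak_nhds_K2 by (intro exI[of _ "{}"] exI[of _ 1]) auto

lemma tendsto_ipU_weak_nhds_K2:
  assumes "v \<in> U_space"
  shows "((\<lambda>w. ipU w v) \<longlongrightarrow> ipU u v) (weak_nhds_K2 u)"
proof (rule tendstoI)
  fix e :: real assume "0 < e"
  with assms show "eventually (\<lambda>w. dist (ipU w v) (ipU u v) < e) (weak_nhds_K2 u)"
    unfolding eventually_weak_nhds_K2 dist_real_def by (intro exI[of _ "{v}"] exI[of _ e]) auto
qed

lemma topspace_weak_topU [simp]: "topspace weak_topU = U_space"
  by (auto simp: weak_topU_def topspace_pullback_topology)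

lemma openin_weak_topU_ipU_ball:
  assumes "finite J" "J \<subseteq> U_space"
  shows "openin weak_topU {w \<in> U_space. \<forall>v\<in>J. \<bar>ipU w v - c v\<bar> < \<delta>}"
proof -
  let ?P = "product_topology (\<lambda>_::ctrl. euclideanreal) U_space"
  have "openin ?P {g \<in> topspace ?P. \<forall>v\<in>J. \<bar>g v - c v\<bar> < \<delta>}"
    using assms
  proof (induction J rule: finite_induct)
    case (insert v J)
    have "openin ?P {g \<in> topspace ?P. g v \<in> ball (c v) \<delta>}"
      using insert.prems by (intro openin_continuous_map_preimage[OF continuous_map_product_projection]) auto
    moreover have "openin ?P {g \<in> topspace ?P. \<forall>v\<in>J. \<bar>g v - c v\<bar> < \<delta>}"
      using insert by simp
    ultimately have "openin ?P ({g \<in> topspace ?P. g v \<in> ball (c v) \<delta>} \<inter> {g \<in> topspace ?P. \<forall>v\<in>J. \<bar>g v - c v\<bar> < \<delta>})"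
      by (rule openin_Int)
    moreover have "{g \<in> topspace ?P. g v \<in> ball (c v) \<delta>} \<inter> {g \<in> topspace ?P. \<forall>v\<in>J. \<bar>g v - c v\<bar> < \<delta>}
        = {g \<in> topspace ?P. \<forall>v\<in>insert v J. \<bar>g v - c v\<bar> < \<delta>}"
      by (auto simp: dist_real_def abs_minus_commute)
    ultimately show ?case
      by simp
  qed (use openin_topspace[of ?P] in simp)
  then have "openin (pullback_topology U_space weak_coords ?P) (weak_coords -` {g \<in> topspace ?P. \<forall>v\<in>J. \<bar>g v - c v\<bar> < \<delta>} \<inter> U_space)"
    unfolding openin_pullback_topology by blast
  moreover have "weak_coords -` {g \<in> topspace ?P. \<forall>v\<in>J. \<bar>g v - c v\<bar> < \<delta>} \<inter> U_space
      = {w \<in> U_space. \<forall>v\<in>J. \<bar>ipU w v - c v\<bar> < \<delta>}"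
    using assms(2) by (auto simp: weak_coords_def subset_iff simp del: split_paired_All)
  ultimately show ?thesis
    by (simp add: weak_topU_eq_pullback)
qed

lemma atin_K2_le_weak_nhds_K2:
  assumes "u \<in> K2"
  shows "atin (subtopology weak_topU K2) u \<le> weak_nhds_K2 u"
proof (rule filter_leI)
  fix P assume "eventually P (weak_nhds_K2 u)"
  then obtain J \<delta> where J: "finite J" "J \<subseteq> U_space" "0 < \<delta>"
    and P: "\<forall>w\<in>K2. (\<forall>v\<in>J. \<bar>ipU w v - ipU u v\<bar> < \<delta>) \<longrightarrow> P w"
    unfolding eventually_weak_nhds_K2 by blast
  let ?V = "K2 \<inter> {w \<in> U_space. \<forall>v\<in>J. \<bar>ipU w v - ipU u v\<bar> < \<delta>}"
  have "openin (subtopology weak_topU K2) ?V"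
    by (rule openin_subtopology_Int2[OF openin_weak_topU_ipU_ball[OF J(1,2)]])
  moreover have "u \<in> ?V"
    using assms J(3) K2_subset_U_space by auto
  moreover have "\<forall>x\<in>?V - {u}. P x"
    using P by blast
  ultimately show "eventually P (atin (subtopology weak_topU K2) u)"
    unfolding eventually_atin by blast
qed

(* In the robot model u1 + u2 is the thrust and u1 - u2 the torque. *)
definition torque_primitive :: "ctrl \<Rightarrow> real \<Rightarrow> real" where
  "torque_primitive w r = integral {0..r} (\<lambda>s. fst w s - snd w s)"

definition thrust_primitive :: "(real \<Rightarrow> real) \<Rightarrow> ctrl \<Rightarrow> real \<Rightarrow> real" where
  "thrust_primitive \<phi> w r = integral {0..r} (\<lambda>s. (fst w s + snd w s) * \<phi> (G3 w s))"

lemma G3_eq_torque_primitive: "G3 w t = pi / 2 + 0.2 * integral {0..t} (torque_primitive w)"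
  by (simp add: G3_def torque_primitive_def[abs_def])

lemma K2_thrust_torque_boundsE:
  assumes "w \<in> K2"
  obtains N where "negligible N"
    "\<And>t. t \<in> I_T - N \<Longrightarrow> \<bar>fst w t - snd w t\<bar> \<le> 1.2 \<and> \<bar>fst w t + snd w t\<bar> \<le> 1.2"
proof -
  obtain N where N: "negligible N" "\<And>t. t \<in> I_T - N \<Longrightarrow> \<bar>fst w t\<bar> \<le> 0.8 \<and> \<bar>snd w t\<bar> \<le> 0.4"
    using K2_boundsE[OF assms] by blast
  have "\<bar>fst w t - snd w t\<bar> \<le> 1.2 \<and> \<bar>fst w t + snd w t\<bar> \<le> 1.2" if "t \<in> I_T - N" for t
    using N(2)[OF that] abs_triangle_ineq[of "fst w t" "snd w t"] abs_triangle_ineq4[of "fst w t" "snd w t"]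
    by linarith
  with N(1) show ?thesis
    by (rule that)
qed

lemma torque_integrable: "w \<in> U_space \<Longrightarrow> (\<lambda>s. fst w s - snd w s) integrable_on I_T"
  by (auto simp: U_space_iff intro: sq_int_integrable sq_int_diff)

lemma thrust_absolutely_integrable: "w \<in> U_space \<Longrightarrow> (\<lambda>s. fst w s + snd w s) absolutely_integrable_on I_T"
  by (auto simp: U_space_iff intro: sq_int_absolutely_integrable sq_int_add)

lemma thrust_mult_integrable:
  assumes w: "w \<in> U_space" and \<phi>: "continuous_on I_T \<phi>" and bound: "\<And>t. t \<in> I_T \<Longrightarrow> \<bar>\<phi> t\<bar> \<le> B"
  shows "(\<lambda>s. (fst w s + snd w s) * \<phi> s) integrable_on I_T"
proof -
  have "(\<lambda>s. \<phi> s * (fst w s + snd w s)) absolutely_integrable_on I_T"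
  proof (rule absolutely_integrable_bounded_measurable_product_real)
    show "\<phi> \<in> borel_measurable (lebesgue_on I_T)"
      by (rule continuous_imp_measurable_on_sets_lebesgue[OF \<phi>]) simp
    show "bounded (\<phi> ` I_T)"
      unfolding bounded_iff using bound by (intro exI[of _ B]) auto
  qed (use thrust_absolutely_integrable[OF w] in simp_all)
  then show ?thesis
    using set_lebesgue_integral_eq_integral(1) by (force simp: mult.commute)
qed

lemma lipschitz_torque_primitive:
  assumes w: "w \<in> K2"
  shows "1.2-lipschitz_on I_T (torque_primitive w)"
proof -
  obtain N where N: "negligible N"
    "\<And>t. t \<in> I_T - N \<Longrightarrow> \<bar>fst w t - snd w t\<bar> \<le> 1.2 \<and> \<bar>fst w t + snd w t\<bar> \<le> 1.2"
    using K2_thrust_torque_boundsE[OF w] by blast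
  have "(\<lambda>s. fst w s - snd w s) integrable_on I_T"
    using w K2_subset_U_space by (intro torque_integrable) auto
  from lipschitz_on_indefinite_integral[OF this N(1)] N(2) show ?thesis
    unfolding torque_primitive_def[abs_def] by simp
qed

lemma ipU_torque_test:
  assumes "r \<in> I_T"
  shows "ipU w (indicator {0..r}, \<lambda>t. - indicator {0..r} t) = torque_primitive w r"
proof -
  have "ipU w (indicator {0..r}, \<lambda>t. - indicator {0..r} t)
      = integral I_T (\<lambda>t. if t \<in> {0..r} then fst w t - snd w t else 0)"
    unfolding ipU_def by (rule integral_cong) (auto simp: indicator_def)
  also have "\<dots> = integral ({0..r} \<inter> I_T) (\<lambda>t. fst w t - snd w t)"
    by (rule Henstock_Kurzweil_Integration.integral_restrict_Int)
  also have "{0..r} \<inter> I_T = {0..r}"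
    using assms by auto
  finally show ?thesis
    by (simp add: torque_primitive_def)
qed

lemma torque_test_in_U_space: "(indicator {0..r}, \<lambda>t. - indicator {0..r} t) \<in> U_space"
  using sq_int_indicator[of "{0..r}"] sq_int_cmult[of "indicator {0..r}" "-1"] by (simp add: U_space_iff)

lemma uniform_limit_torque_primitive:
  assumes u: "u \<in> K2"
  shows "uniform_limit I_T torque_primitive (torque_primitive u) (weak_nhds_K2 u)"
proof (rule uniform_limit_if_tendsto_lipschitz[where M = "1.2"])
  show "((\<lambda>w. torque_primitive w r) \<longlongrightarrow> torque_primitive u r) (weak_nhds_K2 u)" if "r \<in> I_T" for r
    using tendsto_ipU_weak_nhds_K2[OF torque_test_in_U_space[of r], of u] by (simp add: ipU_torque_test[OF that])
  show "eventually (\<lambda>w. 1.2-lipschitz_on I_T (torque_primitive w)) (weak_nhds_K2 u)"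
    using eventually_weak_nhds_K2_in_K2 by (rule eventually_mono) (rule lipschitz_torque_primitive)
  show "1.2-lipschitz_on I_T (torque_primitive u)"
    by (rule lipschitz_torque_primitive[OF u])
qed simp

lemma uniform_limit_G3:
  assumes u: "u \<in> K2"
  shows "uniform_limit I_T G3 (G3 u) (weak_nhds_K2 u)"
proof -
  have int: "torque_primitive w integrable_on I_T" if "w \<in> K2" for w
    using lipschitz_on_continuous_on[OF lipschitz_torque_primitive[OF that]]
    by (rule integrable_continuous_interval)
  have "uniform_limit I_T (\<lambda>w t. pi / 2 + 0.2 * integral {0..t} (torque_primitive w))
      (\<lambda>t. pi / 2 + 0.2 * integral {0..t} (torque_primitive u)) (weak_nhds_K2 u)"
    by (intro uniform_limit_intros uniform_limit_indefinite_integral uniform_limit_torque_primitive u int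
        eventually_mono[OF eventually_weak_nhds_K2_in_K2])
  then show ?thesis
    by (simp add: G3_eq_torque_primitive[abs_def])
qed

lemma continuous_on_G3: "w \<in> U_space \<Longrightarrow> continuous_on I_T (G3 w)"
  unfolding G3_eq_torque_primitive[abs_def] torque_primitive_def[abs_def]
  by (intro continuous_intros indefinite_integral_continuous_1 integrable_continuous_interval torque_integrable)

locale bounded_contraction =
  fixes \<phi> :: "real \<Rightarrow> real"
  assumes bounded: "\<And>x. \<bar>\<phi> x\<bar> \<le> 1" and contraction: "\<And>x y. \<bar>\<phi> x - \<phi> y\<bar> \<le> \<bar>x - y\<bar>"
begin

lemma continuous_on_comp_G3:
  assumes "w \<in> U_space"
  shows "continuous_on I_T (\<lambda>s. \<phi> (G3 w s))"
proof -
  have "1-lipschitz_on UNIV \<phi>"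
    by (rule lipschitz_onI) (simp_all add: dist_real_def contraction)
  then have "continuous_on UNIV \<phi>"
    by (rule lipschitz_on_continuous_on)
  from continuous_on_compose2[OF this continuous_on_G3[OF assms]] show ?thesis
    by simp
qed

lemma thrust_integrand_integrable:
  "w \<in> U_space \<Longrightarrow> (\<lambda>s. (fst w s + snd w s) * \<phi> (G3 w s)) integrable_on I_T"
  by (rule thrust_mult_integrable[OF _ continuous_on_comp_G3 bounded])

lemma lipschitz_thrust_primitive:
  assumes w: "w \<in> K2"
  shows "1.2-lipschitz_on I_T (thrust_primitive \<phi> w)"
proof -
  obtain N where N: "negligible N"
    "\<And>t. t \<in> I_T - N \<Longrightarrow> \<bar>fst w t - snd w t\<bar> \<le> 1.2 \<and> \<bar>fst w t + snd w t\<bar> \<le> 1.2"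
    using K2_thrust_torque_boundsE[OF w] by blast
  have bound: "\<bar>(fst w t + snd w t) * \<phi> (G3 w t)\<bar> \<le> 1.2" if "t \<in> I_T - N" for t
  proof -
    have "\<bar>fst w t + snd w t\<bar> * \<bar>\<phi> (G3 w t)\<bar> \<le> 1.2 * 1"
      using N(2)[OF that] bounded[of "G3 w t"] by (intro mult_mono) auto
    then show ?thesis
      by (simp add: abs_mult)
  qed
  have int: "(\<lambda>s. (fst w s + snd w s) * \<phi> (G3 w s)) integrable_on I_T"
    using w K2_subset_U_space by (intro thrust_integrand_integrable) auto
  show ?thesis
    unfolding thrust_primitive_def[abs_def] by (rule lipschitz_on_indefinite_integral[OF int N(1) bound]) simp_all
qed

definition thrust_test :: "ctrl \<Rightarrow> real \<Rightarrow> ctrl" where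
  "thrust_test u r = (\<lambda>t. indicator {0..r} t * \<phi> (G3 u t), \<lambda>t. indicator {0..r} t * \<phi> (G3 u t))"

lemma thrust_test_in_U_space:
  assumes "u \<in> U_space"
  shows "thrust_test u r \<in> U_space"
proof -
  have "(indicator {0..r} :: real \<Rightarrow> real) \<in> borel_measurable (lebesgue_on I_T)"
    by (intro measurable_restrict_space1 borel_measurable_indicator) simp
  then have "(\<lambda>t. indicator {0..r} t * \<phi> (G3 u t)) \<in> borel_measurable (lebesgue_on I_T)"
    using continuous_imp_measurable_on_sets_lebesgue[OF continuous_on_comp_G3[OF assms]]
    by (intro borel_measurable_times) auto
  then have "sq_int (\<lambda>t. indicator {0..r} t * \<phi> (G3 u t))"
    by (rule sq_intI_bounded[where M = 1]) (use bounded in \<open>auto simp: indicator_def\<close>)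
  then show ?thesis
    by (simp add: thrust_test_def U_space_iff)
qed

lemma ipU_thrust_test:
  assumes "r \<in> I_T"
  shows "ipU w (thrust_test u r) = integral {0..r} (\<lambda>s. (fst w s + snd w s) * \<phi> (G3 u s))"
proof -
  have "ipU w (thrust_test u r)
      = integral I_T (\<lambda>t. if t \<in> {0..r} then (fst w t + snd w t) * \<phi> (G3 u t) else 0)"
    unfolding ipU_def thrust_test_def by (rule integral_cong) (auto simp: indicator_def algebra_simps)
  also have "\<dots> = integral ({0..r} \<inter> I_T) (\<lambda>s. (fst w s + snd w s) * \<phi> (G3 u s))"
    by (rule Henstock_Kurzweil_Integration.integral_restrict_Int)
  also have "{0..r} \<inter> I_T = {0..r}"
    using assms by auto
  finally show ?thesis .
qed

lemma thrust_primitive_eq_ipU_plus_remainder: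
  assumes w: "w \<in> U_space" and u: "u \<in> U_space" and r: "r \<in> I_T"
  shows "thrust_primitive \<phi> w r = ipU w (thrust_test u r)
      + integral {0..r} (\<lambda>s. (fst w s + snd w s) * (\<phi> (G3 w s) - \<phi> (G3 u s)))"
proof -
  have sub: "{0..r} \<subseteq> I_T"
    using r by auto
  have int1: "(\<lambda>s. (fst w s + snd w s) * \<phi> (G3 u s)) integrable_on {0..r}"
    by (rule integrable_on_subinterval[OF thrust_mult_integrable[OF w continuous_on_comp_G3[OF u] bounded] sub])
  have int2: "(\<lambda>s. (fst w s + snd w s) * (\<phi> (G3 w s) - \<phi> (G3 u s))) integrable_on {0..r}"
  proof (rule integrable_on_subinterval[OF thrust_mult_integrable[OF w] sub])
    show "continuous_on I_T (\<lambda>s. \<phi> (G3 w s) - \<phi> (G3 u s))"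
      by (intro continuous_intros continuous_on_comp_G3 w u)
    show "\<bar>\<phi> (G3 w s) - \<phi> (G3 u s)\<bar> \<le> 2" for s
      using bounded[of "G3 w s"] bounded[of "G3 u s"] by linarith
  qed
  have "thrust_primitive \<phi> w r = integral {0..r} (\<lambda>s. (fst w s + snd w s) * \<phi> (G3 u s)
      + (fst w s + snd w s) * (\<phi> (G3 w s) - \<phi> (G3 u s)))"
    unfolding thrust_primitive_def by (rule integral_cong) (simp add: algebra_simps)
  also have "\<dots> = ipU w (thrust_test u r)
      + integral {0..r} (\<lambda>s. (fst w s + snd w s) * (\<phi> (G3 w s) - \<phi> (G3 u s)))"
    unfolding ipU_thrust_test[OF r] by (rule integral_add[OF int1 int2])
  finally show ?thesis .
qed

lemma abs_thrust_remainder_le: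
  assumes w: "w \<in> K2" and u: "u \<in> U_space" and r: "r \<in> I_T"
    and close: "\<And>s. s \<in> I_T \<Longrightarrow> \<bar>G3 w s - G3 u s\<bar> \<le> \<epsilon>"
  shows "\<bar>integral {0..r} (\<lambda>s. (fst w s + snd w s) * (\<phi> (G3 w s) - \<phi> (G3 u s)))\<bar> \<le> 1.2 * T_hor * \<epsilon>"
proof -
  have \<epsilon>: "0 \<le> \<epsilon>"
    using close[OF zero_in_I_T] abs_ge_zero order_trans by blast
  obtain N where N: "negligible N"
    "\<And>t. t \<in> I_T - N \<Longrightarrow> \<bar>fst w t - snd w t\<bar> \<le> 1.2 \<and> \<bar>fst w t + snd w t\<bar> \<le> 1.2"
    using K2_thrust_torque_boundsE[OF w] by blast
  have wU: "w \<in> U_space"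
    using w K2_subset_U_space by blast
  have "\<bar>integral {0..r} (\<lambda>s. (fst w s + snd w s) * (\<phi> (G3 w s) - \<phi> (G3 u s)))\<bar>
      \<le> integral {0..r} (\<lambda>s. 1.2 * \<epsilon>)"
  proof (rule abs_integral_le_AE[OF N(1)])
    fix s assume s: "s \<in> {0..r} - N"
    with r have "s \<in> I_T - N"
      by auto
    then have "\<bar>fst w s + snd w s\<bar> * \<bar>\<phi> (G3 w s) - \<phi> (G3 u s)\<bar> \<le> 1.2 * \<epsilon>"
      using N(2) close contraction[of "G3 w s" "G3 u s"] by (intro mult_mono) (auto intro: order_trans)
    then show "\<bar>(fst w s + snd w s) * (\<phi> (G3 w s) - \<phi> (G3 u s))\<bar> \<le> 1.2 * \<epsilon>"
      by (simp add: abs_mult)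
  next
    have "(\<lambda>s. (fst w s + snd w s) * (\<phi> (G3 w s) - \<phi> (G3 u s))) integrable_on I_T"
    proof (rule thrust_mult_integrable[OF wU])
      show "continuous_on I_T (\<lambda>s. \<phi> (G3 w s) - \<phi> (G3 u s))"
        by (intro continuous_intros continuous_on_comp_G3 wU u)
      show "\<bar>\<phi> (G3 w s) - \<phi> (G3 u s)\<bar> \<le> 2" for s
        using bounded[of "G3 w s"] bounded[of "G3 u s"] by linarith
    qed
    then show "(\<lambda>s. (fst w s + snd w s) * (\<phi> (G3 w s) - \<phi> (G3 u s))) integrable_on {0..r}"
      by (rule integrable_on_subinterval) (use r in auto)
  qed (rule has_integral_integrable[OF has_integral_const_real])
  also have "\<dots> = r * (1.2 * \<epsilon>)"
    using r by simp
  also have "\<dots> \<le> T_hor * (1.2 * \<epsilon>)"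
    using r \<epsilon> by (intro mult_right_mono) auto
  finally show ?thesis
    by (simp add: algebra_simps)
qed

lemma tendsto_thrust_primitive:
  assumes u: "u \<in> K2" and r: "r \<in> I_T"
  shows "((\<lambda>w. thrust_primitive \<phi> w r) \<longlongrightarrow> thrust_primitive \<phi> u r) (weak_nhds_K2 u)"
proof -
  have uU: "u \<in> U_space"
    using u K2_subset_U_space by blast
  \<comment> \<open>Freezing the angle at G3 u leaves an inner product with a fixed test function; the
    remainder R w is small once G3 w is uniformly close to G3 u.\<close>
  define R where "R w = integral {0..r} (\<lambda>s. (fst w s + snd w s) * (\<phi> (G3 w s) - \<phi> (G3 u s)))" for w
  have "(R \<longlongrightarrow> 0) (weak_nhds_K2 u)"
  proof (rule tendstoI)
    fix e :: real assume e: "0 < e"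
    define \<epsilon> where "\<epsilon> = e / (1.2 * T_hor + 1)"
    have den: "0 < 1.2 * T_hor + 1"
      using T_hor_pos by linarith
    have \<epsilon>: "0 < \<epsilon>" "1.2 * T_hor * \<epsilon> < e"
      using e den by (simp_all add: \<epsilon>_def field_simps)
    from uniform_limitD[OF uniform_limit_G3[OF u] \<epsilon>(1)] eventually_weak_nhds_K2_in_K2
    show "eventually (\<lambda>w. dist (R w) 0 < e) (weak_nhds_K2 u)"
    proof eventually_elim
      case (elim w)
      then have "\<bar>R w\<bar> \<le> 1.2 * T_hor * \<epsilon>"
        unfolding R_def by (intro abs_thrust_remainder_le uU r) (auto simp: dist_real_def less_imp_le)
      with \<epsilon>(2) show ?case
        by simp
    qed
  qed
  then have "((\<lambda>w. ipU w (thrust_test u r) + R w) \<longlongrightarrow> ipU u (thrust_test u r) + 0) (weak_nhds_K2 u)"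
    by (intro tendsto_add tendsto_ipU_weak_nhds_K2 thrust_test_in_U_space uU)
  moreover have "ipU u (thrust_test u r) + 0 = thrust_primitive \<phi> u r"
    by (simp add: ipU_thrust_test[OF r] thrust_primitive_def)
  moreover have "eventually (\<lambda>w. ipU w (thrust_test u r) + R w = thrust_primitive \<phi> w r) (weak_nhds_K2 u)"
    using eventually_weak_nhds_K2_in_K2
    by (rule eventually_mono) (use K2_subset_U_space uU r in \<open>auto simp: R_def thrust_primitive_eq_ipU_plus_remainder\<close>)
  ultimately show ?thesis
    using tendsto_cong by force
qed

lemma uniform_limit_thrust_primitive:
  assumes u: "u \<in> K2"
  shows "uniform_limit I_T (thrust_primitive \<phi>) (thrust_primitive \<phi> u) (weak_nhds_K2 u)"
proof (rule uniform_limit_if_tendsto_lipschitz[where M = "1.2"])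
  show "((\<lambda>w. thrust_primitive \<phi> w r) \<longlongrightarrow> thrust_primitive \<phi> u r) (weak_nhds_K2 u)" if "r \<in> I_T" for r
    by (rule tendsto_thrust_primitive[OF u that])
  show "eventually (\<lambda>w. 1.2-lipschitz_on I_T (thrust_primitive \<phi> w)) (weak_nhds_K2 u)"
    using eventually_weak_nhds_K2_in_K2 by (rule eventually_mono) (rule lipschitz_thrust_primitive)
  show "1.2-lipschitz_on I_T (thrust_primitive \<phi> u)"
    by (rule lipschitz_thrust_primitive[OF u])
qed simp


lemma tendsto_integral_thrust_primitive:
  assumes u: "u \<in> K2"
  shows "((\<lambda>w. integral I_T (thrust_primitive \<phi> w)) \<longlongrightarrow> integral I_T (thrust_primitive \<phi> u))
      (weak_nhds_K2 u)"
proof -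
  have int: "thrust_primitive \<phi> w integrable_on I_T" if "w \<in> K2" for w
    using lipschitz_on_continuous_on[OF lipschitz_thrust_primitive[OF that]]
    by (rule integrable_continuous_interval)
  have "uniform_limit I_T (\<lambda>w r. integral {0..r} (thrust_primitive \<phi> w))
      (\<lambda>r. integral {0..r} (thrust_primitive \<phi> u)) (weak_nhds_K2 u)"
  proof (rule uniform_limit_indefinite_integral[OF uniform_limit_thrust_primitive[OF u] _ int[OF u]])
    show "eventually (\<lambda>w. thrust_primitive \<phi> w integrable_on I_T) (weak_nhds_K2 u)"
      using eventually_weak_nhds_K2_in_K2 by (rule eventually_mono) (rule int)
  qed
  from tendsto_uniform_limitI[OF this T_hor_in_I_T] show ?thesis
    by simp
qed
end

interpretation cos: bounded_contraction cos
proof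
  fix x y :: real
  have "\<bar>cos x - cos y\<bar> = 2 * \<bar>sin ((x + y) / 2)\<bar> * \<bar>sin ((y - x) / 2)\<bar>"
    by (simp add: cos_diff_cos abs_mult)
  also have "\<dots> \<le> 2 * 1 * \<bar>(y - x) / 2\<bar>"
    by (intro mult_mono abs_sin_x_le_abs_x) (auto simp: abs_sin_le_one)
  finally show "\<bar>cos x - cos y\<bar> \<le> \<bar>x - y\<bar>"
    by (simp add: abs_minus_commute)
qed (rule abs_cos_le_one)

interpretation sin: bounded_contraction sin
proof
  fix x y :: real
  have "\<bar>sin x - sin y\<bar> = 2 * \<bar>sin ((x - y) / 2)\<bar> * \<bar>cos ((x + y) / 2)\<bar>"
    by (simp add: sin_diff_sin abs_mult)
  also have "\<dots> \<le> 2 * \<bar>(x - y) / 2\<bar> * 1"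
    by (intro mult_mono abs_sin_x_le_abs_x) (auto simp: abs_cos_le_one)
  finally show "\<bar>sin x - sin y\<bar> \<le> \<bar>x - y\<bar>"
    by simp
qed (rule abs_sin_le_one)

lemma exhaust_6:
  fixes x :: 6
  shows "x = 1 \<or> x = 2 \<or> x = 3 \<or> x = 4 \<or> x = 5 \<or> x = 6"
proof (induct x)
  case (of_int z)
  then have "z = 0 \<or> z = 1 \<or> z = 2 \<or> z = 3 \<or> z = 4 \<or> z = 5"
    by fastforce
  then show ?case
    by auto
qed

lemma vector_6_nth:
  "vector [a1, a2, a3, a4, a5, a6] $ (1::6) = a1"
  "vector [a1, a2, a3, a4, a5, a6] $ (2::6) = a2"
  "vector [a1, a2, a3, a4, a5, a6] $ (3::6) = a3"
  "vector [a1, a2, a3, a4, a5, a6] $ (4::6) = a4"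
  "vector [a1, a2, a3, a4, a5, a6] $ (5::6) = a5"
  "vector [a1, a2, a3, a4, a5, a6] $ (6::6) = a6"
  unfolding vector_def vec_lambda_beta by simp_all

lemma h_map_nth:
  "h_map w $ 1 = -10 + integral I_T (thrust_primitive cos w)"
  "h_map w $ 2 = -10 + integral I_T (thrust_primitive sin w)"
  "h_map w $ 3 = G3 w T_hor"
  "h_map w $ 4 = thrust_primitive cos w T_hor"
  "h_map w $ 5 = thrust_primitive sin w T_hor"
  "h_map w $ 6 = 0.2 * torque_primitive w T_hor"
  unfolding h_map_def vector_6_nth thrust_primitive_def[abs_def] torque_primitive_def
  by (rule refl)+

lemma tendsto_h_map:
  assumes u: "u \<in> K2"
  shows "(h_map \<longlongrightarrow> h_map u) (weak_nhds_K2 u)"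
proof (rule vec_tendstoI)
  fix k :: 6
  consider "k = 1" | "k = 2" | "k = 3" | "k = 4" | "k = 5" | "k = 6"
    using exhaust_6 by blast
  then show "((\<lambda>w. h_map w $ k) \<longlongrightarrow> h_map u $ k) (weak_nhds_K2 u)"
  proof cases
    case 1
    show ?thesis
      unfolding 1 h_map_nth by (intro tendsto_add tendsto_const cos.tendsto_integral_thrust_primitive u)
  next
    case 2
    show ?thesis
      unfolding 2 h_map_nth by (intro tendsto_add tendsto_const sin.tendsto_integral_thrust_primitive u)
  next
    case 3
    show ?thesis
      unfolding 3 h_map_nth by (rule tendsto_uniform_limitI[OF uniform_limit_G3[OF u] T_hor_in_I_T])
  next
    case 4
    show ?thesis
      unfolding 4 h_map_nth by (rule tendsto_uniform_limitI[OF cos.uniform_limit_thrust_primitive[OF u] T_hor_in_I_T])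
  next
    case 5
    show ?thesis
      unfolding 5 h_map_nth by (rule tendsto_uniform_limitI[OF sin.uniform_limit_thrust_primitive[OF u] T_hor_in_I_T])
  next
    case 6
    show ?thesis
      unfolding 6 h_map_nth
      by (intro tendsto_mult_left tendsto_uniform_limitI[OF uniform_limit_torque_primitive[OF u] T_hor_in_I_T])
  qed
qed

theorem continuous_map_h_map: "continuous_map (subtopology weak_topU K2) euclidean h_map"
  unfolding continuous_map_atin
proof
  fix u assume "u \<in> topspace (subtopology weak_topU K2)"
  then have u: "u \<in> K2"
    by simp
  show "limitin euclidean h_map (h_map u) (atin (subtopology weak_topU K2) u)"
    unfolding limitin_canonical_iff by (rule tendsto_mono[OF atin_K2_le_weak_nhds_K2[OF u] tendsto_h_map[OF u]])
qed

theorem lemma6p2: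
  fixes z :: "real^6"
  shows "compactin weak_topU {u \<in> K2. h_map u = z} \<and> closedin weak_topU {u \<in> K2. h_map u = z}"
proof -
  have K2: "compactin weak_topU K2" "closedin weak_topU K2"
    using weakly_compact_K2 by auto
  have "closedin (subtopology weak_topU K2) {u \<in> topspace (subtopology weak_topU K2). h_map u \<in> {z}}"
    by (rule closedin_continuous_map_preimage[OF continuous_map_h_map]) simp
  moreover have "{u \<in> topspace (subtopology weak_topU K2). h_map u \<in> {z}} = {u \<in> K2. h_map u = z}"
    using K2_subset_U_space by auto
  ultimately have closed: "closedin weak_topU {u \<in> K2. h_map u = z}"
    using closedin_trans_full[OF _ K2(2)] by simp
  then have "compactin weak_topU {u \<in> K2. h_map u = z}"
    by (rule closed_compactin[OF K2(1), rotated]) auto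
  with closed show ?thesis
    by blast
qed

end
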